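(* Let $n\ge2k$, $\mathbf A_k\in\{\mathbf{TL}_k(n),\mathbf M_k(n),\mathbf{PR}_k\}$, $\lambda=[n-m,m]\in\Lambda^{\mathbf A_k}_n$, and let $r,s\ge0$ with $r+2s=k$ (for $\mathbf{TL}_k(n)$) or $r+s=k$ (otherwise). Then $\chi^\lambda_{\mathbf A_k}(\mathbf 1_r\otimes e^{\otimes s})=\mathsf F^{m,r}_{\mathbf A_k}$, where (a) $\mathsf F^{m,r}_{\mathbf{TL}_k(n)}=\binom{r}{\frac{r-m}{2}}-\binom{r}{\frac{r-m}{2}-1}$; (b) $\mathsf F^{m,r}_{\mathbf M_k(n)}=\sum_{t\ge0}\binom{r}{m+2t}\left(\binom{m+2t}{t}-\binom{m+2t}{t-1}\right)$; (c) $\mathsf F^{m,r}_{\mathbf{PR}_k}=\binom{r}{m}$.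
   Context: $\mathcal P_k$: set partitions of $\{1,\dots,k,1',\dots,k'\}$ (blocks), top row $1..k$, bottom row $1'..k'$; $\mathbf P_k(n)$ has basis $\mathcal P_k$ and product $d_1d_2=n^{\ell(d_1,d_2)}d_1\circ d_2$ (concatenation discarding $\ell$ components lying in the middle). Planar = drawable without crossings inside the rectangle of vertices. $\mathbf{TL}_k(n)$, $\mathbf M_k(n)$, $\mathbf{PR}_k$ are spanned by the planar diagrams all of whose blocks have size 2; size 1 or 2; resp. at most one vertex in each row. $\Lambda^{\mathbf A_k}_n=\{[n-m,m]:0\le m\le k\}$ for $\mathbf M_k,\mathbf{PR}_k$, and with $m\equiv k\bmod 2$ for $\mathbf{TL}_k$. The irreducible module $\mathbf A^\lambda_k$ has basis the symmetric $m$-diagrams in the algebra (a symmetric $m$-diagram is given by a set partition of $\{1..k\}$ with $m$ distinguished blocks $B$, and has blocks $B\cup B'$ for these and $B,B'$ otherwise), with action $d\cdot w=n^{\ell(d,w)}d\circ w\circ d^T$ if this has $m$ propagating blocks, else $0$ ($d^T$ = reflection); $\chi^\lambda_{\mathbf A_k}$ is its character. $\mathbf 1_r$ is the identity diagram in $\mathcal P_r$; $\otimes$ juxtaposes diagrams; $e=\frac1n\mathfrak e_1$ (blocks $\{1,2\},\{1',2'\}$) for $\mathbf{TL}_k$ and $e=\frac1n\mathfrak p_1$ (blocks $\{1\},\{1'\}$) otherwise. Binomial coefficients with negative or too large lower index are $0$. *)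

theory Defs
  imports Complex_Main "HOL-Library.Disjoint_Sets"
begin

text \<open>Vertices: (True,i) is the top vertex i, (False,i) is the bottom vertex i'.\<close>
type_synonym vtx = "bool \<times> nat"
type_synonym diagram = "vtx set set"

definition verts :: "nat \<Rightarrow> vtx set" where
  "verts k = UNIV \<times> {1..k}"

definition Pk :: "nat \<Rightarrow> diagram set" where
  "Pk k = {d. partition_on (verts k) d}"

text \<open>Composition: d1 on top of d2, bottom row of d1 identified with top row of d2.
  Vertices of the stacked picture: (0,i) top, (1,i) middle, (2,i) bottom.\<close>
fun up3 :: "vtx \<Rightarrow> nat \<times> nat" where
  "up3 (b,i) = (if b then (0,i) else (1,i))"
fun dn3 :: "vtx \<Rightarrow> nat \<times> nat" where
  "dn3 (b,i) = (if b then (1,i) else (2,i))"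
fun back3 :: "nat \<times> nat \<Rightarrow> vtx" where
  "back3 (r,i) = (r = 0, i)"

definition stack_verts :: "diagram \<Rightarrow> diagram \<Rightarrow> (nat \<times> nat) set" where
  "stack_verts d1 d2 = (\<Union>B\<in>d1. up3 ` B) \<union> (\<Union>B\<in>d2. dn3 ` B)"

definition stack_rel :: "diagram \<Rightarrow> diagram \<Rightarrow> ((nat \<times> nat) \<times> (nat \<times> nat)) set" where
  "stack_rel d1 d2 = {(x,y). (\<exists>B\<in>d1. x \<in> up3 ` B \<and> y \<in> up3 ` B) \<or>
                              (\<exists>B\<in>d2. x \<in> dn3 ` B \<and> y \<in> dn3 ` B)}"

definition components :: "diagram \<Rightarrow> diagram \<Rightarrow> (nat \<times> nat) set set" where
  "components d1 d2 = stack_verts d1 d2 // ((stack_rel d1 d2)\<^sup>*)"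

definition comp_diag :: "diagram \<Rightarrow> diagram \<Rightarrow> diagram" where
  "comp_diag d1 d2 = {back3 ` (C \<inter> {v. fst v \<noteq> 1}) | C.
       C \<in> components d1 d2 \<and> C \<inter> {v. fst v \<noteq> 1} \<noteq> {}}"

definition ell :: "diagram \<Rightarrow> diagram \<Rightarrow> nat" where
  "ell d1 d2 = card {C \<in> components d1 d2. C \<subseteq> {v. fst v = 1}}"

definition transp_diag :: "diagram \<Rightarrow> diagram" where
  "transp_diag d = (\<lambda>B. (\<lambda>(b,i). (\<not> b, i)) ` B) ` d"

text \<open>Planarity: with vertices placed on a circle in the order 1,...,k,k',...,1',
  no two distinct blocks cross.\<close>
fun cpos :: "nat \<Rightarrow> vtx \<Rightarrow> nat" where
  "cpos k (b,i) = (if b then i else 2*k + 1 - i)"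

definition planar :: "nat \<Rightarrow> diagram \<Rightarrow> bool" where
  "planar k d \<longleftrightarrow> (\<forall>B1\<in>d. \<forall>B2\<in>d. B1 \<noteq> B2 \<longrightarrow>
     \<not> (\<exists>a\<in>B1. \<exists>c\<in>B1. \<exists>b\<in>B2. \<exists>e\<in>B2.
          cpos k a < cpos k b \<and> cpos k b < cpos k c \<and> cpos k c < cpos k e))"

datatype alg = TL | Motzkin | PlanarRook

definition in_alg :: "alg \<Rightarrow> nat \<Rightarrow> diagram \<Rightarrow> bool" where
  "in_alg A k d \<longleftrightarrow> d \<in> Pk k \<and> planar k d \<and>
     (case A of
        TL \<Rightarrow> (\<forall>B\<in>d. card B = 2)
      | Motzkin \<Rightarrow> (\<forall>B\<in>d. card B = 1 \<or> card B = 2)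
      | PlanarRook \<Rightarrow> (\<forall>B\<in>d. card {i. (True,i) \<in> B} \<le> 1 \<and> card {i. (False,i) \<in> B} \<le> 1))"

definition nprop :: "diagram \<Rightarrow> nat" where
  "nprop d = card {B\<in>d. (\<exists>i. (True,i) \<in> B) \<and> (\<exists>i. (False,i) \<in> B)}"

definition sym_diag :: "nat \<Rightarrow> nat \<Rightarrow> diagram \<Rightarrow> bool" where
  "sym_diag k m d \<longleftrightarrow> (\<exists>\<pi> S. partition_on {1..k} \<pi> \<and> S \<subseteq> \<pi> \<and> card S = m \<and>
     d = {(Pair True ` B) \<union> (Pair False ` B) | B. B \<in> S}
         \<union> {Pair True ` B | B. B \<in> \<pi> - S} \<union> {Pair False ` B | B. B \<in> \<pi> - S})"

text \<open>Basis of the irreducible module A_k^\<lambda>, \<lambda> = [n-m,m].\<close>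
definition module_basis :: "alg \<Rightarrow> nat \<Rightarrow> nat \<Rightarrow> diagram set" where
  "module_basis A k m = {w. sym_diag k m w \<and> in_alg A k w}"

text \<open>Coefficient of w in d \<cdot> w.\<close>
definition act_coeff :: "real \<Rightarrow> nat \<Rightarrow> diagram \<Rightarrow> diagram \<Rightarrow> diagram \<Rightarrow> real" where
  "act_coeff n m d w w' =
     (let u = comp_diag (comp_diag d w) (transp_diag d) in
      if nprop u = m \<and> u = w' then n ^ ell d w else 0)"

definition diag_trace :: "alg \<Rightarrow> nat \<Rightarrow> real \<Rightarrow> nat \<Rightarrow> diagram \<Rightarrow> real" where
  "diag_trace A k n m d = (\<Sum>w\<in>module_basis A k m. act_coeff n m d w w)"

text \<open>Algebra elements: real linear combinations of diagrams (coefficient functions);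
  the character is the linear extension of the trace.\<close>
definition character :: "alg \<Rightarrow> nat \<Rightarrow> real \<Rightarrow> nat \<Rightarrow> (diagram \<Rightarrow> real) \<Rightarrow> real" where
  "character A k n m x = (\<Sum>d\<in>{d. in_alg A k d}. x d * diag_trace A k n m d)"

text \<open>Juxtaposition of diagrams (d1 has a vertices per row).\<close>
definition juxt :: "nat \<Rightarrow> diagram \<Rightarrow> diagram \<Rightarrow> diagram" where
  "juxt a d1 d2 = d1 \<union> (\<lambda>B. (\<lambda>(b,i). (b, i + a)) ` B) ` d2"

definition id_diag :: "nat \<Rightarrow> diagram" where
  "id_diag r = {{(True,i),(False,i)} | i. i \<in> {1..r}}"

text \<open>The diagram underlying e (e = (1/n) e_1 for TL, e = (1/n) p_1 otherwise) and its width.\<close>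
definition e_diag :: "alg \<Rightarrow> diagram" where
  "e_diag A = (case A of TL \<Rightarrow> {{(True,1),(True,2)},{(False,1),(False,2)}}
                        | _ \<Rightarrow> {{(True,1)},{(False,1)}})"

definition e_width :: "alg \<Rightarrow> nat" where
  "e_width A = (case A of TL \<Rightarrow> 2 | _ \<Rightarrow> 1)"

fun e_pow_diag :: "alg \<Rightarrow> nat \<Rightarrow> diagram" where
  "e_pow_diag A 0 = {}"
| "e_pow_diag A (Suc s) = juxt (e_width A) (e_diag A) (e_pow_diag A s)"

definition one_tensor_e :: "alg \<Rightarrow> real \<Rightarrow> nat \<Rightarrow> nat \<Rightarrow> (diagram \<Rightarrow> real)" where
  "one_tensor_e A n r s =
     (\<lambda>d. if d = juxt r (id_diag r) (e_pow_diag A s) then (1 / n) ^ s else 0)"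

definition binomZ :: "nat \<Rightarrow> int \<Rightarrow> int" where
  "binomZ r j = (if j < 0 then 0 else int (r choose nat j))"

definition F_val :: "alg \<Rightarrow> nat \<Rightarrow> nat \<Rightarrow> int" where
  "F_val A m r = (case A of
      TL \<Rightarrow> binomZ r ((int r - int m) div 2) - binomZ r ((int r - int m) div 2 - 1)
    | Motzkin \<Rightarrow> (\<Sum>t\<le>r. binomZ r (int (m + 2*t)) *
                    (binomZ (m + 2*t) (int t) - binomZ (m + 2*t) (int t - 1)))
    | PlanarRook \<Rightarrow> binomZ r (int m))"

text \<open>Index set \<Lambda>_n^{A_k}: the admissible m (\<lambda> = [n-m,m]).\<close>
definition admissible_m :: "alg \<Rightarrow> nat \<Rightarrow> nat \<Rightarrow> bool" where
  "admissible_m A k m \<longleftrightarrow> m \<le> k \<and> (A = TL \<longrightarrow> m mod 2 = k mod 2)"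

end

theory Submission
  imports Defs
begin

text \<open>A basis diagram of \<open>A\<^sub>k\<^sup>\<lambda>\<close> is determined by its top half: a noncrossing partition of
  \<open>{1..k}\<close> whose \<open>m\<close> propagating blocks are singletons not enclosed by any other block (a half
  diagram).  The element \<open>1\<^sub>r \<otimes> e\<^sup>\<otimes>\<^sup>s\<close> acts diagonally on this basis: if the top blocks of the
  \<open>s\<close> copies of \<open>e\<close> are blocks of the top half of \<open>w\<close>, then \<open>w\<close> is fixed and \<open>s\<close> closed loops
  appear, cancelling the factor \<open>n\<^sup>-\<^sup>s\<close>; otherwise such a top block survives and the diagonal
  coefficient is \<open>0\<close>.
  Hence the character counts the half diagrams on the remaining \<open>r\<close> points with \<open>m\<close> marks.
  Classifying them by the block of the last point gives the recursion for lattice paths with steps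
  \<open>\<plusminus>1\<close> (\<open>TL\<close>), \<open>\<plusminus>1, 0\<close> (Motzkin) or \<open>+1, 0\<close> (planar rook) from \<open>0\<close> to \<open>m\<close>, which are
  counted by the stated binomial expressions.\<close>

section \<open>Counting paths\<close>

text \<open>Paths of length \<open>r\<close> in \<open>\<nat>\<close> from \<open>0\<close> to \<open>m\<close>: Dyck-type paths (steps \<open>\<plusminus>1\<close>) for
  \<open>TL\<close>, Motzkin paths (steps \<open>\<plusminus>1, 0\<close>), and paths with steps \<open>+1, 0\<close> for \<open>PlanarRook\<close>.\<close>

fun path_count :: "alg \<Rightarrow> nat \<Rightarrow> nat \<Rightarrow> nat" where
  "path_count A 0 m = (if m = 0 then 1 else 0)"
| "path_count A (Suc r) m = (if m \<ge> 1 then path_count A r (m - 1) else 0)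
     + (if A = TL then 0 else path_count A r m)
     + (if A = PlanarRook then 0 else path_count A r (Suc m))"

lemma binomZ_of_nat [simp]: "binomZ r (int j) = int (r choose j)"
  by (simp add: binomZ_def)

lemma binomZ_Suc: "binomZ (Suc r) j = binomZ r j + binomZ r (j - 1)"
proof (cases "j > 0")
  case True
  then obtain i where "j = int (Suc i)"
    by (metis gr0_implies_Suc pos_int_cases zero_less_imp_eq_int)
  then have "nat (j - 1) = i" "nat j = Suc i" by auto
  then show ?thesis using True by (simp add: binomZ_def)
qed (auto simp: binomZ_def)

lemma path_count_eq_0_if_less: "r < m \<Longrightarrow> path_count A r m = 0"
  by (induction r arbitrary: m) auto

lemma path_count_TL_odd: "odd (r + m) \<Longrightarrow> path_count TL r m = 0"
  by (induction r arbitrary: m) (auto simp: odd_pos)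

lemma path_count_TL:
  assumes "even (r + m)"
  shows "int (path_count TL r m)
      = binomZ r ((int r - int m) div 2) - binomZ r ((int r - int m) div 2 - 1)"
  using assms
proof (induction r arbitrary: m)
  case 0
  then show ?case by (auto simp: binomZ_def)
next
  case (Suc r)
  define q where "q = (int (Suc r) - int m) div 2"
  have ev_up: "even (r + Suc m)" using Suc.prems by simp
  have q_up: "(int r - int (Suc m)) div 2 = q - 1"
    using Suc.prems unfolding q_def by (auto elim!: evenE simp: algebra_simps)
  show ?case
  proof (cases "m \<ge> 1")
    case True
    have ev_down: "even (r + (m - 1))" using Suc.prems True by (simp add: even_add)
    have q_down: "(int r - int (m - 1)) div 2 = q" using True unfolding q_def by (simp add: of_nat_diff)
    have "int (path_count TL (Suc r) m) = int (path_count TL r (m - 1)) + int (path_count TL r (Suc m))"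
      using True by simp
    also have "\<dots> = (binomZ r q - binomZ r (q - 1)) + (binomZ r (q - 1) - binomZ r (q - 1 - 1))"
      using Suc.IH[OF ev_down] Suc.IH[OF ev_up] q_down q_up by simp
    also have "\<dots> = binomZ (Suc r) q - binomZ (Suc r) (q - 1)"
      by (simp add: binomZ_Suc)
    finally show ?thesis unfolding q_def .
  next
    case False
    then have m0: "m = 0" by simp
    then obtain p where p: "Suc r = 2 * p" using Suc.prems by (metis add_0_right evenE)
    then have qp: "q = int p" "p \<ge> 1" unfolding q_def using m0 by auto
    have "r = p + (p - 1)" using p qp(2) by simp
    then have "r choose p = r choose (p - 1)"
      by (metis add_diff_cancel_left' binomial_symmetric le_add1)
    then have middle: "binomZ r q = binomZ r (q - 1)"
      using qp by (simp add: binomZ_def nat_diff_distrib)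
    have "int (path_count TL (Suc r) m) = int (path_count TL r (Suc m))" using m0 by simp
    also have "\<dots> = binomZ r (q - 1) - binomZ r (q - 1 - 1)"
      using Suc.IH[OF ev_up] q_up by simp
    also have "\<dots> = binomZ (Suc r) q - binomZ (Suc r) (q - 1)"
      using middle by (simp add: binomZ_Suc)
    finally show ?thesis unfolding q_def .
  qed
qed

lemma path_count_PlanarRook: "path_count PlanarRook r m = r choose m"
proof (induction r arbitrary: m)
  case (Suc r)
  then show ?case by (cases m) auto
qed simp

text \<open>A Motzkin path is a Dyck path with flat steps inserted at a set of positions.\<close>

lemma path_count_Motzkin: "path_count Motzkin r m = (\<Sum>j\<le>r. (r choose j) * path_count TL j m)"
proof (induction r arbitrary: m)
  case 0
  then show ?case by simp
next
  case (Suc r)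
  have "(\<Sum>j\<le>Suc r. (Suc r choose j) * path_count TL j m)
      = (\<Sum>j\<le>Suc r. (r choose j) * path_count TL j m)
        + (\<Sum>j\<le>Suc r. if j = 0 then 0 else (r choose (j - 1)) * path_count TL j m)"
  proof (subst sum.distrib[symmetric], rule sum.cong)
    fix j
    show "(Suc r choose j) * path_count TL j m
        = (r choose j) * path_count TL j m + (if j = 0 then 0 else (r choose (j - 1)) * path_count TL j m)"
      by (cases j) (auto simp: algebra_simps)
  qed simp
  also have "(\<Sum>j\<le>Suc r. (r choose j) * path_count TL j m) = path_count Motzkin r m"
    by (simp add: Suc.IH)
  also have "(\<Sum>j\<le>Suc r. if j = 0 then 0 else (r choose (j - 1)) * path_count TL j m)
     = (\<Sum>i\<le>r. (r choose i) * path_count TL (Suc i) m)"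
    by (subst sum.atMost_Suc_shift) simp
  also have "\<dots> = (\<Sum>i\<le>r. (if m \<ge> 1 then (r choose i) * path_count TL i (m - 1) else 0)
                          + (r choose i) * path_count TL i (Suc m))"
    by (rule sum.cong) (auto simp: algebra_simps)
  also have "\<dots> = (if m \<ge> 1 then path_count Motzkin r (m - 1) else 0) + path_count Motzkin r (Suc m)"
    by (simp add: sum.distrib Suc.IH)
  finally show ?case by simp
qed

lemma path_count_Motzkin_by_height:
  "path_count Motzkin r m = (\<Sum>t\<le>r. (r choose (m + 2 * t)) * path_count TL (m + 2 * t) m)"
proof -
  define f where "f j = (r choose j) * path_count TL j m" for j
  have inj: "inj (\<lambda>t. m + 2 * t)" by (auto simp: inj_def)
  have "(\<Sum>t\<le>r. f (m + 2 * t)) = (\<Sum>j\<in>(\<lambda>t. m + 2 * t) ` {..r}. f j)"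
    by (simp add: sum.reindex inj_on_subset[OF inj])
  also have "\<dots> = (\<Sum>j\<le>m + 2 * r. f j)"
  proof (rule sum.mono_neutral_left)
    show "\<forall>j\<in>{..m + 2 * r} - (\<lambda>t. m + 2 * t) ` {..r}. f j = 0"
    proof
      fix j assume j: "j \<in> {..m + 2 * r} - (\<lambda>t. m + 2 * t) ` {..r}"
      have "j < m \<or> odd (j + m)"
      proof (rule ccontr)
        assume "\<not> (j < m \<or> odd (j + m))"
        then have "even (j - m)" "m \<le> j" by auto
        then obtain t where "j - m = 2 * t" by (metis evenE)
        then have "j = m + 2 * t" "t \<le> r" using j \<open>m \<le> j\<close> by auto
        then show False using j by blast
      qed
      then show "f j = 0" by (auto simp: f_def path_count_eq_0_if_less path_count_TL_odd)
    qed
  qed auto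
  also have "\<dots> = (\<Sum>j\<le>r. f j)"
    by (rule sum.mono_neutral_right) (auto simp: f_def)
  finally show ?thesis by (simp add: f_def path_count_Motzkin)
qed

lemma F_val_eq_path_count:
  assumes "A = TL \<Longrightarrow> even (r + m)"
  shows "F_val A m r = int (path_count A r m)"
proof (cases A)
  case TL
  then show ?thesis using path_count_TL[of r m] assms by (simp add: F_val_def)
next
  case PlanarRook
  then show ?thesis by (simp add: F_val_def path_count_PlanarRook)
next
  case Motzkin
  have "int (path_count TL (m + 2 * t) m)
      = binomZ (m + 2 * t) (int t) - binomZ (m + 2 * t) (int t - 1)" for t
    using path_count_TL[of "m + 2 * t" m] by simp
  then show ?thesis
    using Motzkin by (simp add: F_val_def path_count_Motzkin_by_height of_nat_sum del: of_nat_add)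
qed

section \<open>Half diagrams\<close>

lemma partition_on_iff:
  "partition_on A P \<longleftrightarrow> (\<forall>B\<in>P. B \<noteq> {} \<and> B \<subseteq> A) \<and> (\<forall>x\<in>A. \<exists>B\<in>P. x \<in> B)
     \<and> (\<forall>B1\<in>P. \<forall>B2\<in>P. \<forall>x. x \<in> B1 \<longrightarrow> x \<in> B2 \<longrightarrow> B1 = B2)"
  unfolding partition_on_def disjoint_def by blast

lemma partition_on_cover: "partition_on A P \<Longrightarrow> x \<in> A \<Longrightarrow> \<exists>B\<in>P. x \<in> B"
  and partition_on_disjoint: "partition_on A P \<Longrightarrow> B1 \<in> P \<Longrightarrow> B2 \<in> P \<Longrightarrow> x \<in> B1 \<Longrightarrow> x \<in> B2 \<Longrightarrow> B1 = B2"
  and partition_on_block: "partition_on A P \<Longrightarrow> B \<in> P \<Longrightarrow> B \<subseteq> A \<and> B \<noteq> {}"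
  unfolding partition_on_iff by blast+

lemma partition_on_insert_singleton:
  "partition_on A P \<Longrightarrow> x \<notin> A \<Longrightarrow> partition_on (insert x A) (insert {x} P)"
  using partition_on_insert[of "{x}" P "insert x A"] partition_onD1[of A P] by (auto simp: disjnt_def)

lemma partition_on_Un:
  assumes P: "partition_on A P" and Q: "partition_on B Q" and "A \<inter> B = {}"
  shows "partition_on (A \<union> B) (P \<union> Q)"
proof (rule partition_onI)
  show "\<Union>(P \<union> Q) = A \<union> B" using partition_onD1[OF P] partition_onD1[OF Q] by auto
  show "{} \<notin> P \<union> Q" using partition_onD3[OF P] partition_onD3[OF Q] by blast
  fix p q assume pq: "p \<in> P \<union> Q" "q \<in> P \<union> Q" "p \<noteq> q"
  have cross: "p \<inter> q = {}" if "p \<subseteq> A" "q \<subseteq> B" for p q using that \<open>A \<inter> B = {}\<close> by blast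
  consider "p \<in> P" "q \<in> P" | "p \<in> P" "q \<in> Q" | "p \<in> Q" "q \<in> P" | "p \<in> Q" "q \<in> Q"
    using pq(1,2) by blast
  then show "disjnt p q"
  proof cases
    case 1
    then show ?thesis using disjointD[OF partition_onD2[OF P]] pq(3) by (simp add: disjnt_def)
  next
    case 2
    then show ?thesis
      using cross partition_on_block[OF P] partition_on_block[OF Q] by (simp add: disjnt_def)
  next
    case 3
    then show ?thesis using cross[of q p] partition_on_block[OF P] partition_on_block[OF Q]
      by (auto simp: disjnt_def)
  next
    case 4
    then show ?thesis using disjointD[OF partition_onD2[OF Q]] pq(3) by (simp add: disjnt_def)
  qed
qed

lemma partition_on_Diff:
  assumes P: "partition_on A P" and "Q \<subseteq> P"
  shows "partition_on (A - \<Union>Q) (P - Q)"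
proof (rule partition_onI)
  show "\<Union>(P - Q) = A - \<Union>Q"
  proof (intro equalityI subsetI)
    fix x assume "x \<in> \<Union>(P - Q)"
    then obtain p where p: "p \<in> P" "p \<notin> Q" "x \<in> p" by blast
    then have "x \<notin> \<Union>Q" using partition_on_disjoint[OF P] \<open>Q \<subseteq> P\<close> by blast
    then show "x \<in> A - \<Union>Q" using partition_on_block[OF P p(1)] p(3) by blast
  next
    fix x assume "x \<in> A - \<Union>Q"
    then show "x \<in> \<Union>(P - Q)" using partition_on_cover[OF P] by blast
  qed
  show "{} \<notin> P - Q" using partition_onD3[OF P] by blast
  show "disjnt p q" if "p \<in> P - Q" "q \<in> P - Q" "p \<noteq> q" for p q
    using disjointD[OF partition_onD2[OF P]] that unfolding disjnt_def by blast
qed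

lemma partition_on_remove:
  assumes "partition_on A P" and "B \<in> P"
  shows "partition_on (A - B) (P - {B})"
proof -
  have "disjnt B (\<Union>(P - {B}))"
    using assms partition_onD2[OF assms(1)] by (auto simp: disjnt_def disjoint_def)
  moreover have "insert B (P - {B}) = P" using assms(2) by blast
  ultimately show ?thesis using partition_on_insert[of B "P - {B}" A] assms(1) by simp
qed

text \<open>A half diagram on \<open>{1..r}\<close> is the top half of a symmetric diagram: a noncrossing partition
  \<open>P\<close> together with the set \<open>S \<subseteq> P\<close> of blocks that propagate to the bottom row.\<close>

definition admissible_size :: "alg \<Rightarrow> nat \<Rightarrow> bool" where
  "admissible_size A c = (case A of TL \<Rightarrow> c = 2 | Motzkin \<Rightarrow> c = 1 \<or> c = 2 | PlanarRook \<Rightarrow> c = 1)"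

definition noncrossing :: "nat set set \<Rightarrow> bool" where
  "noncrossing P \<longleftrightarrow> (\<forall>B1\<in>P. \<forall>B2\<in>P. B1 \<noteq> B2 \<longrightarrow>
     (\<forall>a\<in>B1. \<forall>c\<in>B1. \<forall>b\<in>B2. \<forall>e\<in>B2. \<not> (a < b \<and> b < c \<and> c < e)))"

definition marks_exposed :: "nat set set \<Rightarrow> nat set set \<Rightarrow> bool" where
  "marks_exposed P S \<longleftrightarrow> (\<forall>B\<in>P - S. \<forall>j. {j} \<in> S \<longrightarrow> (\<forall>a\<in>B. \<forall>c\<in>B. \<not> (a < j \<and> j < c)))"

definition half_diagram :: "alg \<Rightarrow> nat \<Rightarrow> nat set set \<Rightarrow> nat set set \<Rightarrow> bool" where
  "half_diagram A r P S \<longleftrightarrow> partition_on {1..r} P \<and> S \<subseteq> P \<and> (\<forall>B\<in>S. card B = 1)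
     \<and> (\<forall>B\<in>P - S. admissible_size A (card B)) \<and> noncrossing P \<and> marks_exposed P S"

definition half_diagrams :: "alg \<Rightarrow> nat \<Rightarrow> nat \<Rightarrow> (nat set set \<times> nat set set) set" where
  "half_diagrams A r m = {(P, S). half_diagram A r P S \<and> card S = m}"

lemma noncrossingD:
  "noncrossing P \<Longrightarrow> B1 \<in> P \<Longrightarrow> B2 \<in> P \<Longrightarrow> B1 \<noteq> B2 \<Longrightarrow> a \<in> B1 \<Longrightarrow> c \<in> B1
    \<Longrightarrow> b \<in> B2 \<Longrightarrow> e \<in> B2 \<Longrightarrow> a < b \<Longrightarrow> b < c \<Longrightarrow> c < e \<Longrightarrow> False"
  unfolding noncrossing_def by fast

lemma noncrossingI:
  "(\<And>B1 B2 a b c e. B1 \<in> P \<Longrightarrow> B2 \<in> P \<Longrightarrow> B1 \<noteq> B2 \<Longrightarrow> a \<in> B1 \<Longrightarrow> c \<in> B1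
    \<Longrightarrow> b \<in> B2 \<Longrightarrow> e \<in> B2 \<Longrightarrow> a < b \<Longrightarrow> b < c \<Longrightarrow> c < e \<Longrightarrow> False) \<Longrightarrow> noncrossing P"
  unfolding noncrossing_def by fast

lemma marks_exposedD:
  "marks_exposed P S \<Longrightarrow> B \<in> P \<Longrightarrow> B \<notin> S \<Longrightarrow> {j} \<in> S \<Longrightarrow> a \<in> B \<Longrightarrow> c \<in> B
    \<Longrightarrow> a < j \<Longrightarrow> j < c \<Longrightarrow> False"
  unfolding marks_exposed_def by fast

lemma marks_exposedI:
  "(\<And>B j a c. B \<in> P \<Longrightarrow> B \<notin> S \<Longrightarrow> {j} \<in> S \<Longrightarrow> a \<in> B \<Longrightarrow> c \<in> B \<Longrightarrow> a < j \<Longrightarrow> j < c \<Longrightarrow> False)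
    \<Longrightarrow> marks_exposed P S"
  unfolding marks_exposed_def by fast

lemma noncrossing_subset: "noncrossing P \<Longrightarrow> Q \<subseteq> P \<Longrightarrow> noncrossing Q"
  unfolding noncrossing_def by (meson subsetD)

lemma noncrossing_insert_singleton: "noncrossing P \<Longrightarrow> noncrossing (insert {x} P)"
proof (rule noncrossingI)
  fix B1 B2 a b c e
  assume nc: "noncrossing P" and h: "B1 \<in> insert {x} P" "B2 \<in> insert {x} P" "B1 \<noteq> B2"
    "a \<in> B1" "c \<in> B1" "b \<in> B2" "e \<in> B2" "a < b" "b < c" "c < e"
  then have "B1 \<noteq> {x}" "B2 \<noteq> {x}" by auto
  then show False using noncrossingD[OF nc _ _ h(3-10)] h(1,2) by blast
qed

lemma marks_exposed_mono: "marks_exposed P S \<Longrightarrow> Q - T \<subseteq> P - S \<Longrightarrow> T \<subseteq> S \<Longrightarrow> marks_exposed Q T"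
  unfolding marks_exposed_def by fast

lemma half_diagramI:
  "partition_on {1..r} P \<Longrightarrow> S \<subseteq> P \<Longrightarrow> (\<And>B. B \<in> S \<Longrightarrow> card B = 1)
    \<Longrightarrow> (\<And>B. B \<in> P \<Longrightarrow> B \<notin> S \<Longrightarrow> admissible_size A (card B))
    \<Longrightarrow> noncrossing P \<Longrightarrow> marks_exposed P S \<Longrightarrow> half_diagram A r P S"
  by (simp add: half_diagram_def)

context
  fixes A r P S
  assumes hd: "half_diagram A r P S"
begin

lemma half_diagram_partition: "partition_on {1..r} P"
  using hd by (simp add: half_diagram_def)

lemma half_diagram_marks_subset: "S \<subseteq> P"
  using hd by (simp add: half_diagram_def)

lemma half_diagram_noncrossing: "noncrossing P"
  using hd by (simp add: half_diagram_def)

lemma half_diagram_marks_exposed: "marks_exposed P S"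
  using hd by (simp add: half_diagram_def)

lemma half_diagram_size: "B \<in> P \<Longrightarrow> B \<notin> S \<Longrightarrow> admissible_size A (card B)"
  using hd by (simp add: half_diagram_def)

lemma half_diagram_mark_singleton: "B \<in> S \<Longrightarrow> \<exists>x. B = {x}"
  using hd by (metis card_1_singletonE half_diagram_def)

lemma half_diagram_block: "B \<in> P \<Longrightarrow> B \<subseteq> {1..r} \<and> B \<noteq> {}"
  by (rule partition_on_block[OF half_diagram_partition])

lemma half_diagram_disjoint: "B1 \<in> P \<Longrightarrow> B2 \<in> P \<Longrightarrow> x \<in> B1 \<Longrightarrow> x \<in> B2 \<Longrightarrow> B1 = B2"
  by (rule partition_on_disjoint[OF half_diagram_partition])

lemma half_diagram_cover: "x \<in> {1..r} \<Longrightarrow> \<exists>B\<in>P. x \<in> B"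
  by (rule partition_on_cover[OF half_diagram_partition])

lemma half_diagram_finite: "finite P" "finite S"
  using finite_elements[OF _ half_diagram_partition] half_diagram_marks_subset
  by (auto intro: finite_subset)

end

lemma finite_half_diagrams: "finite (half_diagrams A r m)"
proof (rule finite_subset)
  show "half_diagrams A r m \<subseteq> Pow (Pow {1..r}) \<times> Pow (Pow {1..r})"
    using half_diagram_block half_diagram_marks_subset by (fastforce simp: half_diagrams_def)
qed auto

lemma half_diagrams_0: "half_diagrams A 0 m = (if m = 0 then {({}, {})} else {})"
  by (auto simp: half_diagrams_def half_diagram_def partition_on_empty noncrossing_def marks_exposed_def)

text \<open>The new point \<open>r + 1\<close> lies to the right of every block, so as a singleton it neither crosses
  nor encloses anything, and as a mark it cannot be enclosed.\<close>

lemma half_diagram_add_last: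
  assumes hd: "half_diagram A r P S" and T: "T = S \<or> T = insert {Suc r} S"
    and size: "T = S \<Longrightarrow> admissible_size A 1"
  shows "half_diagram A (Suc r) (insert {Suc r} P) T"
proof (rule half_diagramI)
  show "partition_on {1..Suc r} (insert {Suc r} P)"
    using partition_on_insert_singleton[OF half_diagram_partition[OF hd], of "Suc r"]
    by (simp add: atLeastAtMostSuc_conv)
  show "noncrossing (insert {Suc r} P)"
    by (rule noncrossing_insert_singleton[OF half_diagram_noncrossing[OF hd]])
  show "marks_exposed (insert {Suc r} P) T"
  proof (rule marks_exposedI)
    fix B j a c assume h: "B \<in> insert {Suc r} P" "B \<notin> T" "{j} \<in> T" "a \<in> B" "c \<in> B" "a < j" "j < c"
    then have B: "B \<in> P" "B \<notin> S" using T by auto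
    show False
    proof (cases "j = Suc r")
      case True
      then show ?thesis using half_diagram_block[OF hd B(1)] h by auto
    next
      case False
      then have "{j} \<in> S" using h(3) T by auto
      then show ?thesis using marks_exposedD[OF half_diagram_marks_exposed[OF hd] B _ h(4-7)] by blast
    qed
  qed
next
  show "T \<subseteq> insert {Suc r} P" using half_diagram_marks_subset[OF hd] T by blast
next
  fix B assume "B \<in> T"
  then show "card B = 1" using T half_diagram_mark_singleton[OF hd] by force
next
  fix B assume "B \<in> insert {Suc r} P" "B \<notin> T"
  then show "admissible_size A (card B)" using T size half_diagram_size[OF hd] by auto
qed

lemma half_diagram_remove_last:
  assumes hd: "half_diagram A (Suc r) P S" and R: "{Suc r} \<in> P"
  shows "half_diagram A r (P - {{Suc r}}) (S - {{Suc r}})"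
proof (rule half_diagramI)
  show "partition_on {1..r} (P - {{Suc r}})"
    using partition_on_remove[OF half_diagram_partition[OF hd] R] by (simp add: atLeastAtMostSuc_conv)
  show "noncrossing (P - {{Suc r}})"
    using noncrossing_subset[OF half_diagram_noncrossing[OF hd]] by blast
  show "marks_exposed (P - {{Suc r}}) (S - {{Suc r}})"
    using marks_exposed_mono[OF half_diagram_marks_exposed[OF hd]] by blast
next
  show "S - {{Suc r}} \<subseteq> P - {{Suc r}}" using half_diagram_marks_subset[OF hd] by blast
next
  fix B assume "B \<in> S - {{Suc r}}"
  then show "card B = 1" using half_diagram_mark_singleton[OF hd] by force
next
  fix B assume "B \<in> P - {{Suc r}}" "B \<notin> S - {{Suc r}}"
  then show "admissible_size A (card B)" using half_diagram_size[OF hd] by auto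
qed

lemma noncrossing_close_arc:
  assumes hd: "half_diagram A r P S" and j: "{j} \<in> S"
  shows "noncrossing (insert {j, Suc r} (P - {{j}}))"
proof (rule noncrossingI)
  let ?R = "Suc r"
  have jP: "{j} \<in> P" using j half_diagram_marks_subset[OF hd] by blast
  have old: "B \<subseteq> {1..r} - {j}" if "B \<in> P - {{j}}" for B
    using that half_diagram_block[OF hd] half_diagram_disjoint[OF hd _ jP, of B j] by blast
  fix B1 B2 a b c e assume h: "B1 \<in> insert {j, ?R} (P - {{j}})" "B2 \<in> insert {j, ?R} (P - {{j}})"
    "B1 \<noteq> B2" "a \<in> B1" "c \<in> B1" "b \<in> B2" "e \<in> B2" "a < b" "b < c" "c < e"
  consider "B1 = {j, ?R}" "B2 \<in> P - {{j}}" | "B2 = {j, ?R}" "B1 \<in> P - {{j}}" | "B1 \<in> P" "B2 \<in> P"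
    using h(1-3) by blast
  then show False
  proof cases
    case 1
    then show ?thesis using old[OF 1(2)] h(4,5,7-10) by auto
  next
    case 2
    then have "a < j" "j < c" using old[OF 2(2)] h(4-10) by auto
    moreover have "B1 \<notin> S" using half_diagram_mark_singleton[OF hd] h(4,5,8,9) by force
    ultimately show ?thesis
      using marks_exposedD[OF half_diagram_marks_exposed[OF hd] _ _ j h(4,5)] 2(2) by blast
  next
    case 3
    then show ?thesis using noncrossingD[OF half_diagram_noncrossing[OF hd] _ _ h(3-10)] by blast
  qed
qed

text \<open>The arc from the mark \<open>j\<close> to the new point \<open>r + 1\<close> encloses no other mark precisely
  because \<open>j\<close> is the rightmost one.\<close>

lemma half_diagram_close_arc:
  assumes hd: "half_diagram A r P S" and size: "admissible_size A 2"
    and j: "{j} \<in> S" and rightmost: "\<And>i. {i} \<in> S \<Longrightarrow> i \<le> j"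
  shows "half_diagram A (Suc r) (insert {j, Suc r} (P - {{j}})) (S - {{j}})"
proof (rule half_diagramI)
  let ?R = "Suc r"
  have jP: "{j} \<in> P" using j half_diagram_marks_subset[OF hd] by blast
  have jr: "j \<in> {1..r}" using half_diagram_block[OF hd jP] by simp
  have old: "B \<subseteq> {1..r} - {j}" if "B \<in> P - {{j}}" for B
    using that half_diagram_block[OF hd] half_diagram_disjoint[OF hd _ jP, of B j] by blast
  show "partition_on {1..?R} (insert {j, ?R} (P - {{j}}))"
  proof -
    have rest: "partition_on ({1..r} - {j}) (P - {{j}})"
      using partition_on_remove[OF half_diagram_partition[OF hd] jP] .
    have "disjnt {j, ?R} (\<Union>(P - {{j}}))" using old by (force simp: disjnt_def)
    moreover have "{1..?R} - {j, ?R} = {1..r} - {j}" by auto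
    ultimately show ?thesis using partition_on_insert[of "{j, ?R}" "P - {{j}}" "{1..?R}"] rest jr by auto
  qed
  show "S - {{j}} \<subseteq> insert {j, ?R} (P - {{j}})" using half_diagram_marks_subset[OF hd] by blast
  show "card B = 1" if "B \<in> S - {{j}}" for B
    using that half_diagram_mark_singleton[OF hd] by force
  show "admissible_size A (card B)" if "B \<in> insert {j, ?R} (P - {{j}})" "B \<notin> S - {{j}}" for B
  proof (cases "B = {j, ?R}")
    case True
    then have "card B = 2" using jr by simp
    then show ?thesis using size by simp
  next
    case False
    then show ?thesis using that half_diagram_size[OF hd] by auto
  qed
  show "noncrossing (insert {j, ?R} (P - {{j}}))"
    using noncrossing_close_arc[OF hd j] .
  show "marks_exposed (insert {j, ?R} (P - {{j}})) (S - {{j}})"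
  proof (rule marks_exposedI)
    fix B i a c assume h: "B \<in> insert {j, ?R} (P - {{j}})" "B \<notin> S - {{j}}" "{i} \<in> S - {{j}}"
      "a \<in> B" "c \<in> B" "a < i" "i < c"
    have "i < j" using rightmost[of i] h(3) by force
    show False
    proof (cases "B = {j, ?R}")
      case True
      then show ?thesis using h(4-7) \<open>i < j\<close> jr by auto
    next
      case False
      then have "B \<in> P" "B \<notin> S" using h(1,2) by auto
      then show ?thesis
        using marks_exposedD[OF half_diagram_marks_exposed[OF hd] _ _ _ h(4-7)] h(3) by blast
    qed
  qed
qed

lemma half_diagram_open_arc:
  assumes hd: "half_diagram A (Suc r) P S" and B: "{j, Suc r} \<in> P" and jr: "j < Suc r"
  shows "half_diagram A r (insert {j} (P - {{j, Suc r}})) (insert {j} S)"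
    and "\<And>i. {i} \<in> S \<Longrightarrow> i < j"
proof -
  let ?R = "Suc r"
  have j1: "j \<in> {1..r}" using half_diagram_block[OF hd B] jr by auto
  have BS: "{j, ?R} \<notin> S"
  proof
    assume "{j, ?R} \<in> S"
    then obtain x where "{j, ?R} = {x}" using half_diagram_mark_singleton[OF hd] by blast
    then have "j = ?R" by (metis insertI1 insert_commute singletonD)
    then show False using jr by simp
  qed
  have old: "B' \<subseteq> {1..r} - {j}" if B': "B' \<in> P" "B' \<noteq> {j, ?R}" for B'
  proof
    fix x assume x: "x \<in> B'"
    have "x \<noteq> j" "x \<noteq> ?R" using half_diagram_disjoint[OF hd B'(1) B, of x] x B'(2) by auto
    moreover have "x \<in> {1..?R}" using half_diagram_block[OF hd B'(1)] x by blast
    ultimately show "x \<in> {1..r} - {j}" by auto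
  qed
  show marks_left: "i < j" if i: "{i} \<in> S" for i
  proof -
    have iP: "{i} \<in> P" using i half_diagram_marks_subset[OF hd] by blast
    have "{i} \<noteq> {j, ?R}" using jr by auto
    then have "i \<le> r" "i \<noteq> j" using old[OF iP] by auto
    then show "i < j"
      using marks_exposedD[OF half_diagram_marks_exposed[OF hd] B BS i, of j ?R] by fastforce
  qed
  show "half_diagram A r (insert {j} (P - {{j, ?R}})) (insert {j} S)"
  proof (rule half_diagramI)
    show "partition_on {1..r} (insert {j} (P - {{j, ?R}}))"
    proof -
      have "partition_on (insert j ({1..?R} - {j, ?R})) (insert {j} (P - {{j, ?R}}))"
        using partition_on_insert_singleton[OF partition_on_remove[OF half_diagram_partition[OF hd] B]]
        by simp
      moreover have "insert j ({1..?R} - {j, ?R}) = {1..r}" using j1 by auto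
      ultimately show ?thesis by simp
    qed
    show "insert {j} S \<subseteq> insert {j} (P - {{j, ?R}})" using half_diagram_marks_subset[OF hd] BS by blast
    show "card B' = 1" if "B' \<in> insert {j} S" for B'
      using that half_diagram_mark_singleton[OF hd] by force
    show "admissible_size A (card B')" if "B' \<in> insert {j} (P - {{j, ?R}})" "B' \<notin> insert {j} S" for B'
      using that half_diagram_size[OF hd] by auto
    show "noncrossing (insert {j} (P - {{j, ?R}}))"
      using noncrossing_insert_singleton noncrossing_subset[OF half_diagram_noncrossing[OF hd]] by blast
    show "marks_exposed (insert {j} (P - {{j, ?R}})) (insert {j} S)"
    proof (rule marks_exposedI)
      fix B' i a c assume h: "B' \<in> insert {j} (P - {{j, ?R}})" "B' \<notin> insert {j} S" "{i} \<in> insert {j} S"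
        "a \<in> B'" "c \<in> B'" "a < i" "i < c"
      have B': "B' \<in> P" "B' \<noteq> {j, ?R}" "B' \<notin> S" using h(1,2) by auto
      show False
      proof (cases "i = j")
        case True
        have "c < ?R" using old[OF B'(1,2)] h(5) by auto
        then show ?thesis
          using noncrossingD[OF half_diagram_noncrossing[OF hd] B'(1) B B'(2) h(4,5), of j ?R] True h(6,7)
          by simp
      next
        case False
        then have "{i} \<in> S" using h(3) by auto
        then show ?thesis
          using marks_exposedD[OF half_diagram_marks_exposed[OF hd] B'(1,3) _ h(4-7)] by blast
      qed
    qed
  qed
qed

lemma half_diagram_last_block_cases:
  assumes hd: "half_diagram A (Suc r) P S"
  obtains "{Suc r} \<in> S" | "{Suc r} \<in> P" "{Suc r} \<notin> S" | j where "j < Suc r" "{j, Suc r} \<in> P"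
proof -
  obtain B where B: "B \<in> P" "Suc r \<in> B" using half_diagram_cover[OF hd, of "Suc r"] by auto
  have "card B = 1 \<or> card B = 2"
  proof (cases "B \<in> S")
    case True
    then show ?thesis using half_diagram_mark_singleton[OF hd] by force
  next
    case False
    then show ?thesis using half_diagram_size[OF hd B(1)] by (cases A) (auto simp: admissible_size_def)
  qed
  moreover have sub: "B \<subseteq> {1..Suc r}" using half_diagram_block[OF hd B(1)] by blast
  ultimately consider "B = {Suc r}" | j where "j < Suc r" "B = {j, Suc r}"
  proof (elim disjE)
    assume "card B = 1"
    then show thesis using B(2) that(1) by (auto simp: card_1_singleton_iff)
  next
    assume "card B = 2"
    then obtain a b where ab: "a \<noteq> b" "B = {a, b}" by (auto simp: card_2_iff)
    define j where "j = (if a = Suc r then b else a)"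
    have "B = {j, Suc r}" "j < Suc r" using ab B(2) sub unfolding j_def by auto
    then show thesis using that(2) by blast
  qed
  then show thesis using B(1) that by cases auto
qed

lemma last_point_not_in_block: "half_diagram A r P S \<Longrightarrow> B \<in> P \<Longrightarrow> Suc r \<notin> B"
  using half_diagram_block by fastforce

lemma card_half_diagrams_last_marked:
  "card {x \<in> half_diagrams A (Suc r) m. {Suc r} \<in> snd x}
     = (if m \<ge> 1 then card (half_diagrams A r (m - 1)) else 0)"
proof (cases "m \<ge> 1")
  case False
  have "{x \<in> half_diagrams A (Suc r) m. {Suc r} \<in> snd x} = {}"
  proof safe
    fix P S assume "(P, S) \<in> half_diagrams A (Suc r) m" "{Suc r} \<in> snd (P, S)"
    then have "finite S" "card S = m" "S \<noteq> {}"
      using half_diagram_finite(2) by (auto simp: half_diagrams_def)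
    then show "(P, S) \<in> {}" using False card_0_eq by fastforce
  qed
  then show ?thesis using False by (metis card.empty)
next
  case True
  let ?f = "\<lambda>(P, S). (insert {Suc r} P, insert {Suc r} S)"
  let ?g = "\<lambda>(P, S). (P - {{Suc r}}, S - {{Suc r}})"
  have "bij_betw ?f (half_diagrams A r (m - 1)) {x \<in> half_diagrams A (Suc r) m. {Suc r} \<in> snd x}"
  proof (rule bij_betw_byWitness)
    show "\<forall>x\<in>half_diagrams A r (m - 1). ?g (?f x) = x"
      using last_point_not_in_block half_diagram_marks_subset
      by (fastforce simp: half_diagrams_def)
    show "\<forall>x\<in>{x \<in> half_diagrams A (Suc r) m. {Suc r} \<in> snd x}. ?f (?g x) = x"
      using half_diagram_marks_subset by (fastforce simp: half_diagrams_def)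
    show "?f ` half_diagrams A r (m - 1) \<subseteq> {x \<in> half_diagrams A (Suc r) m. {Suc r} \<in> snd x}"
    proof (rule image_subsetI)
      fix x assume "x \<in> half_diagrams A r (m - 1)"
      moreover obtain P S where PS: "x = (P, S)" by fastforce
      ultimately have hd: "half_diagram A r P S" and c: "card S = m - 1"
        by (auto simp: half_diagrams_def)
      have "{Suc r} \<notin> S" using last_point_not_in_block[OF hd] half_diagram_marks_subset[OF hd] by blast
      then have "card (insert {Suc r} S) = m" "insert {Suc r} S \<noteq> S"
        using c True half_diagram_finite(2)[OF hd] by auto
      then show "?f x \<in> {x \<in> half_diagrams A (Suc r) m. {Suc r} \<in> snd x}"
        using PS half_diagram_add_last[OF hd, of "insert {Suc r} S"] by (simp add: half_diagrams_def)
    qed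
    show "?g ` {x \<in> half_diagrams A (Suc r) m. {Suc r} \<in> snd x} \<subseteq> half_diagrams A r (m - 1)"
    proof (rule image_subsetI)
      fix x assume "x \<in> {x \<in> half_diagrams A (Suc r) m. {Suc r} \<in> snd x}"
      moreover obtain P S where PS: "x = (P, S)" by fastforce
      ultimately have hd: "half_diagram A (Suc r) P S" and c: "card S = m" and RS: "{Suc r} \<in> S"
        by (auto simp: half_diagrams_def)
      have "card (S - {{Suc r}}) = m - 1" using c RS half_diagram_finite(2)[OF hd] by simp
      then show "?g x \<in> half_diagrams A r (m - 1)"
        using PS half_diagram_remove_last[OF hd] RS half_diagram_marks_subset[OF hd]
        by (auto simp: half_diagrams_def)
    qed
  qed
  then show ?thesis using True by (simp add: bij_betw_same_card)
qed

lemma card_half_diagrams_last_singleton: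
  "card {x \<in> half_diagrams A (Suc r) m. {Suc r} \<in> fst x \<and> {Suc r} \<notin> snd x}
     = (if A = TL then 0 else card (half_diagrams A r m))"
proof (cases "A = TL")
  case True
  have "{x \<in> half_diagrams A (Suc r) m. {Suc r} \<in> fst x \<and> {Suc r} \<notin> snd x} = {}"
  proof safe
    fix P S assume "(P, S) \<in> half_diagrams A (Suc r) m" "{Suc r} \<in> fst (P, S)" "{Suc r} \<notin> snd (P, S)"
    then have "admissible_size A (card {Suc r})"
      using half_diagram_size[of A "Suc r" P S "{Suc r}"] by (simp add: half_diagrams_def)
    then show "(P, S) \<in> {}" using True by (simp add: admissible_size_def)
  qed
  then show ?thesis using True by (metis card.empty)
next
  case False
  then have size: "admissible_size A 1" by (cases A) (auto simp: admissible_size_def)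
  let ?f = "\<lambda>(P, S). (insert {Suc r} P, S)"
  let ?g = "\<lambda>(P, S). (P - {{Suc r}}, S)"
  have "bij_betw ?f (half_diagrams A r m) {x \<in> half_diagrams A (Suc r) m. {Suc r} \<in> fst x \<and> {Suc r} \<notin> snd x}"
  proof (rule bij_betw_byWitness)
    show "\<forall>x\<in>half_diagrams A r m. ?g (?f x) = x"
      using last_point_not_in_block by (fastforce simp: half_diagrams_def)
    show "\<forall>x\<in>{x \<in> half_diagrams A (Suc r) m. {Suc r} \<in> fst x \<and> {Suc r} \<notin> snd x}. ?f (?g x) = x"
      by auto
    show "?f ` half_diagrams A r m
        \<subseteq> {x \<in> half_diagrams A (Suc r) m. {Suc r} \<in> fst x \<and> {Suc r} \<notin> snd x}"
      using half_diagram_add_last[OF _ _ size] last_point_not_in_block half_diagram_marks_subset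
      by (fastforce simp: half_diagrams_def)
    show "?g ` {x \<in> half_diagrams A (Suc r) m. {Suc r} \<in> fst x \<and> {Suc r} \<notin> snd x}
        \<subseteq> half_diagrams A r m"
      using half_diagram_remove_last by (fastforce simp: half_diagrams_def)
  qed
  then show ?thesis using False by (simp add: bij_betw_same_card)
qed

lemma rightmost_mark:
  assumes hd: "half_diagram A r P S" and "S \<noteq> {}"
  shows "{Max (\<Union>S)} \<in> S" and "\<And>i. {i} \<in> S \<Longrightarrow> i \<le> Max (\<Union>S)"
proof -
  have fin: "finite (\<Union>S)"
    using half_diagram_finite[OF hd] half_diagram_block[OF hd] half_diagram_marks_subset[OF hd]
    by (meson finite_Union finite_atLeastAtMost finite_subset subsetD)
  have "\<Union>S \<noteq> {}" using assms half_diagram_mark_singleton[OF hd] by fastforce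
  then obtain B where "B \<in> S" "Max (\<Union>S) \<in> B" using Max_in[OF fin] by blast
  then show "{Max (\<Union>S)} \<in> S" using half_diagram_mark_singleton[OF hd] by force
  show "i \<le> Max (\<Union>S)" if "{i} \<in> S" for i using that fin by (auto intro: Max_ge)
qed

lemma Max_marks_eq: "half_diagram A r P S \<Longrightarrow> {j} \<in> S \<Longrightarrow> (\<And>i. {i} \<in> S \<Longrightarrow> i \<le> j) \<Longrightarrow> Max (\<Union>S) = j"
  using rightmost_mark by (metis empty_iff le_antisym)

lemma arc_partner_eq:
  assumes hd: "half_diagram A r P S" and B: "{j, x} \<in> P" and "j < x"
  shows "Min (\<Union>{B \<in> P. x \<in> B}) = j"
proof -
  have "{B \<in> P. x \<in> B} = {{j, x}}" using half_diagram_disjoint[OF hd _ B, of _ x] B by blast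
  then show ?thesis using \<open>j < x\<close> by simp
qed

definition close_last_arc :: "nat \<Rightarrow> nat set set \<times> nat set set \<Rightarrow> nat set set \<times> nat set set" where
  "close_last_arc r = (\<lambda>(P, S). let j = Max (\<Union>S) in (insert {j, Suc r} (P - {{j}}), S - {{j}}))"

definition open_last_arc :: "nat \<Rightarrow> nat set set \<times> nat set set \<Rightarrow> nat set set \<times> nat set set" where
  "open_last_arc r = (\<lambda>(P, S). let j
      = Min (\<Union>{B \<in> P. Suc r \<in> B}) in (insert {j} (P - {{j, Suc r}}), insert {j} S))"

lemma close_last_arc_half_diagram:
  assumes hd: "half_diagram A r P S" and size: "admissible_size A 2" and c: "card S = Suc m"
  shows "close_last_arc r (P, S) \<in> {x \<in> half_diagrams A (Suc r) m. \<exists>j<Suc r. {j, Suc r} \<in> fst x}"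
    and "open_last_arc r (close_last_arc r (P, S)) = (P, S)"
proof -
  define j where "j = Max (\<Union>S)"
  have "S \<noteq> {}" using c by auto
  note mark = rightmost_mark[OF hd this, folded j_def]
  have jP: "{j} \<in> P" using mark(1) half_diagram_marks_subset[OF hd] by blast
  have jr: "j < Suc r" using half_diagram_block[OF hd jP] by auto
  have cl: "close_last_arc r (P, S) = (insert {j, Suc r} (P - {{j}}), S - {{j}})"
    by (simp add: close_last_arc_def j_def Let_def)
  have hd': "half_diagram A (Suc r) (insert {j, Suc r} (P - {{j}})) (S - {{j}})"
    using half_diagram_close_arc[OF hd size mark] .
  moreover have "card (S - {{j}}) = m" using c mark(1) half_diagram_finite(2)[OF hd] by simp
  ultimately show "close_last_arc r (P, S) \<in> {x \<in> half_diagrams A (Suc r) m. \<exists>j<Suc r. {j, Suc r} \<in> fst x}"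
    using cl jr by (auto simp: half_diagrams_def)
  have "Min (\<Union>{B \<in> insert {j, Suc r} (P - {{j}}). Suc r \<in> B}) = j"
    using arc_partner_eq[OF hd'] jr by blast
  moreover have "{j, Suc r} \<notin> P" using last_point_not_in_block[OF hd] by blast
  ultimately show "open_last_arc r (close_last_arc r (P, S)) = (P, S)"
    using cl jP mark(1) by (auto simp: open_last_arc_def Let_def insert_absorb)
qed

lemma open_last_arc_half_diagram:
  assumes hd: "half_diagram A (Suc r) P S" and c: "card S = m" and B: "{j, Suc r} \<in> P" "j < Suc r"
  shows "open_last_arc r (P, S) \<in> half_diagrams A r (Suc m)"
    and "close_last_arc r (open_last_arc r (P, S)) = (P, S)"
proof -
  have op: "open_last_arc r (P, S) = (insert {j} (P - {{j, Suc r}}), insert {j} S)"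
    using arc_partner_eq[OF hd B] by (simp add: open_last_arc_def)
  note hd' = half_diagram_open_arc(1)[OF hd B] and left = half_diagram_open_arc(2)[OF hd B]
  have jP: "{j} \<notin> P" using half_diagram_disjoint[OF hd _ B(1), of "{j}" j] B(2) by auto
  then have jS: "{j} \<notin> S" using half_diagram_marks_subset[OF hd] by blast
  then show "open_last_arc r (P, S) \<in> half_diagrams A r (Suc m)"
    using op hd' c half_diagram_finite(2)[OF hd] by (simp add: half_diagrams_def)
  have "Max (\<Union>(insert {j} S)) = j"
    by (rule Max_marks_eq[OF hd']) (auto dest: left)
  then show "close_last_arc r (open_last_arc r (P, S)) = (P, S)"
    using op jP jS B(1) by (auto simp: close_last_arc_def Let_def insert_absorb)
qed

lemma card_half_diagrams_last_arc:
  "card {x \<in> half_diagrams A (Suc r) m. \<exists>j<Suc r. {j, Suc r} \<in> fst x}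
     = (if A = PlanarRook then 0 else card (half_diagrams A r (Suc m)))"
proof (cases "A = PlanarRook")
  case True
  have "{x \<in> half_diagrams A (Suc r) m. \<exists>j<Suc r. {j, Suc r} \<in> fst x} = {}"
  proof safe
    fix P S j assume "(P, S) \<in> half_diagrams A (Suc r) m" "j < Suc r" "{j, Suc r} \<in> fst (P, S)"
    then have hd: "half_diagram A (Suc r) P S" and B: "{j, Suc r} \<in> P" "card {j, Suc r} = 2"
      by (auto simp: half_diagrams_def)
    then have "{j, Suc r} \<notin> S" using half_diagram_mark_singleton[OF hd] by force
    then show "(P, S) \<in> {}"
      using half_diagram_size[OF hd B(1)] B(2) True by (simp add: admissible_size_def)
  qed
  then show ?thesis using True by (metis card.empty)
next
  case False
  then have size: "admissible_size A 2" by (cases A) (auto simp: admissible_size_def)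
  have "bij_betw (close_last_arc r) (half_diagrams A r (Suc m))
      {x \<in> half_diagrams A (Suc r) m. \<exists>j<Suc r. {j, Suc r} \<in> fst x}"
  proof (rule bij_betw_byWitness[where f' = "open_last_arc r"])
    show "\<forall>x\<in>half_diagrams A r (Suc m). open_last_arc r (close_last_arc r x) = x"
      using close_last_arc_half_diagram(2)[OF _ size] by (auto simp: half_diagrams_def)
    show "close_last_arc r ` half_diagrams A r (Suc m)
        \<subseteq> {x \<in> half_diagrams A (Suc r) m. \<exists>j<Suc r. {j, Suc r} \<in> fst x}"
    proof (rule image_subsetI)
      fix x assume "x \<in> half_diagrams A r (Suc m)"
      moreover obtain P S where "x = (P, S)" by fastforce
      ultimately show "close_last_arc r x \<in> {x \<in> half_diagrams A (Suc r) m. \<exists>j<Suc r. {j, Suc r} \<in> fst x}"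
        using close_last_arc_half_diagram(1)[OF _ size] by (simp add: half_diagrams_def)
    qed
    show "\<forall>x\<in>{x \<in> half_diagrams A (Suc r) m. \<exists>j<Suc r. {j, Suc r} \<in> fst x}.
        close_last_arc r (open_last_arc r x) = x"
      using open_last_arc_half_diagram(2) by (auto simp: half_diagrams_def)
    show "open_last_arc r ` {x \<in> half_diagrams A (Suc r) m. \<exists>j<Suc r. {j, Suc r} \<in> fst x}
        \<subseteq> half_diagrams A r (Suc m)"
    proof (rule image_subsetI)
      fix x assume x: "x \<in> {x \<in> half_diagrams A (Suc r) m. \<exists>j<Suc r. {j, Suc r} \<in> fst x}"
      obtain P S where PS: "x = (P, S)" by fastforce
      with x obtain j where "half_diagram A (Suc r) P S" "card S = m" "{j, Suc r} \<in> P" "j < Suc r"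
        by (auto simp: half_diagrams_def)
      then show "open_last_arc r x \<in> half_diagrams A r (Suc m)"
        using PS open_last_arc_half_diagram(1) by simp
    qed
  qed
  then show ?thesis using False by (simp add: bij_betw_same_card)
qed

lemma card_half_diagrams: "card (half_diagrams A r m) = path_count A r m"
proof (induction r arbitrary: m)
  case 0
  then show ?case by (simp add: half_diagrams_0)
next
  case (Suc r)
  let ?M = "{x \<in> half_diagrams A (Suc r) m. {Suc r} \<in> snd x}"
  let ?N = "{x \<in> half_diagrams A (Suc r) m. {Suc r} \<in> fst x \<and> {Suc r} \<notin> snd x}"
  let ?C = "{x \<in> half_diagrams A (Suc r) m. \<exists>j<Suc r. {j, Suc r} \<in> fst x}"
  have split: "half_diagrams A (Suc r) m = ?M \<union> ?N \<union> ?C"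
    by (auto simp: half_diagrams_def elim: half_diagram_last_block_cases)
  have "{Suc r} \<notin> P" if "half_diagram A (Suc r) P S" "{j, Suc r} \<in> P" "j < Suc r" for P S j
    using half_diagram_disjoint[OF that(1,2), of "{Suc r}" "Suc r"] that(3) by auto
  then have disj: "?M \<inter> ?N = {}" "(?M \<union> ?N) \<inter> ?C = {}"
    using half_diagram_marks_subset by (fastforce simp: half_diagrams_def)+
  have "card (half_diagrams A (Suc r) m) = card ?M + card ?N + card ?C"
    using finite_half_diagrams disj by (subst split) (simp add: card_Un_disjoint)
  also have "\<dots> = path_count A (Suc r) m"
    unfolding card_half_diagrams_last_marked card_half_diagrams_last_singleton
      card_half_diagrams_last_arc Suc.IH path_count.simps(2) by simp
  finally show ?case .
qed

section \<open>Symmetric diagrams\<close>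

definition top_copy :: "nat set \<Rightarrow> vtx set" where
  "top_copy B = Pair True ` B"

definition bot_copy :: "nat set \<Rightarrow> vtx set" where
  "bot_copy B = Pair False ` B"

definition symmetric_diagram :: "nat set set \<Rightarrow> nat set set \<Rightarrow> diagram" where
  "symmetric_diagram P S =
     (\<lambda>B. top_copy B \<union> bot_copy B) ` S \<union> top_copy ` (P - S) \<union> bot_copy ` (P - S)"

lemma sym_diag_iff:
  "sym_diag k m d \<longleftrightarrow>
     (\<exists>P S. partition_on {1..k} P \<and> S \<subseteq> P \<and> card S = m \<and> d = symmetric_diagram P S)"
  unfolding sym_diag_def symmetric_diagram_def top_copy_def bot_copy_def
  by (simp add: setcompr_eq_image set_diff_eq)

lemma top_copy_iff [simp]: "(b, i) \<in> top_copy B \<longleftrightarrow> b \<and> i \<in> B"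
  and bot_copy_iff [simp]: "(b, i) \<in> bot_copy B \<longleftrightarrow> \<not> b \<and> i \<in> B"
  by (auto simp: top_copy_def bot_copy_def)

lemma top_copy_eq [simp]: "top_copy B1 = top_copy B2 \<longleftrightarrow> B1 = B2"
  and bot_copy_eq [simp]: "bot_copy B1 = bot_copy B2 \<longleftrightarrow> B1 = B2"
  and full_copy_eq [simp]: "top_copy B1 \<union> bot_copy B1 = top_copy B2 \<union> bot_copy B2 \<longleftrightarrow> B1 = B2"
  and top_copy_eq_bot_copy [simp]: "top_copy B1 = bot_copy B2 \<longleftrightarrow> B1 = {} \<and> B2 = {}"
  and bot_copy_eq_top_copy [simp]: "bot_copy B2 = top_copy B1 \<longleftrightarrow> B1 = {} \<and> B2 = {}"
  and full_copy_eq_top_copy [simp]: "top_copy B1 \<union> bot_copy B1 = top_copy B2 \<longleftrightarrow> B1 = {} \<and> B2 = {}"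
  and full_copy_eq_bot_copy [simp]: "top_copy B1 \<union> bot_copy B1 = bot_copy B2 \<longleftrightarrow> B1 = {} \<and> B2 = {}"
  and top_copy_eq_full_copy [simp]: "top_copy B2 = top_copy B1 \<union> bot_copy B1 \<longleftrightarrow> B1 = {} \<and> B2 = {}"
  and bot_copy_eq_full_copy [simp]: "bot_copy B2 = top_copy B1 \<union> bot_copy B1 \<longleftrightarrow> B1 = {} \<and> B2 = {}"
  by (auto simp: top_copy_def bot_copy_def)

lemma card_top_copy [simp]: "card (top_copy B) = card B"
  and card_bot_copy [simp]: "card (bot_copy B) = card B"
  unfolding top_copy_def bot_copy_def by (simp_all add: card_image inj_on_def)

lemma card_full_copy: "finite B \<Longrightarrow> card (top_copy B \<union> bot_copy B) = 2 * card B"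
  by (subst card_Un_disjoint) (auto simp: top_copy_def bot_copy_def card_image inj_on_def)

lemma symmetric_diagram_mem:
  "X \<in> symmetric_diagram P S \<longleftrightarrow> (\<exists>B\<in>S. X = top_copy B \<union> bot_copy B)
     \<or> (\<exists>B\<in>P - S. X = top_copy B) \<or> (\<exists>B\<in>P - S. X = bot_copy B)"
  unfolding symmetric_diagram_def by blast

lemma partition_on_symmetric_diagram:
  assumes p: "partition_on {1..k} P" and S: "S \<subseteq> P"
  shows "partition_on (verts k) (symmetric_diagram P S)"
  unfolding partition_on_iff
proof (intro conjI ballI allI impI)
  fix X assume "X \<in> symmetric_diagram P S"
  then obtain B where B: "B \<in> P" "X = top_copy B \<union> bot_copy B \<or> X = top_copy B \<or> X = bot_copy B"
    using S by (auto simp: symmetric_diagram_mem)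
  have "B \<noteq> {}" "B \<subseteq> {1..k}" using p B(1) by (auto simp: partition_on_iff)
  then show "X \<noteq> {}" "X \<subseteq> verts k" using B(2) by (auto simp: verts_def top_copy_def bot_copy_def)
next
  fix v assume "v \<in> verts k"
  then obtain b i where v: "v = (b,i)" "i \<in> {1..k}" by (auto simp: verts_def)
  then obtain B where B: "B \<in> P" "i \<in> B" using p unfolding partition_on_iff by blast
  show "\<exists>X\<in>symmetric_diagram P S. v \<in> X"
  proof (cases "B \<in> S")
    case True then show ?thesis
      using B v by (intro bexI[of _ "top_copy B \<union> bot_copy B"]) (auto simp: symmetric_diagram_mem)
  next
    case False
    show ?thesis
    proof (cases b)
      case True then show ?thesis
        using B v False by (intro bexI[of _ "top_copy B"]) (auto simp: symmetric_diagram_mem)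
    next
      case F: False then show ?thesis
        using B v False by (intro bexI[of _ "bot_copy B"]) (auto simp: symmetric_diagram_mem)
    qed
  qed
next
  fix X1 X2 v assume h: "X1 \<in> symmetric_diagram P S" "X2 \<in> symmetric_diagram P S" "v \<in> X1" "v \<in> X2"
  obtain b i where v: "v = (b,i)" by (cases v)
  have disj: "B1 \<in> P \<Longrightarrow> B2 \<in> P \<Longrightarrow> i \<in> B1 \<Longrightarrow> i \<in> B2 \<Longrightarrow> B1 = B2" for B1 B2
    using p by (auto simp: partition_on_iff)
  from h(1,3) obtain B1 where B1: "B1 \<in> P" "i \<in> B1"
      "X1 = (if B1 \<in> S then top_copy B1 \<union> bot_copy B1 else if b then top_copy B1 else bot_copy B1)"
    using S v by (auto simp: symmetric_diagram_mem)
  from h(2,4) obtain B2 where B2: "B2 \<in> P" "i \<in> B2"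
      "X2 = (if B2 \<in> S then top_copy B2 \<union> bot_copy B2 else if b then top_copy B2 else bot_copy B2)"
    using S v by (auto simp: symmetric_diagram_mem)
  show "X1 = X2" using disj[OF B1(1) B2(1) B1(2) B2(2)] B1(3) B2(3) by simp
qed

definition block_ok :: "alg \<Rightarrow> vtx set \<Rightarrow> bool" where
  "block_ok A X = (case A of TL \<Rightarrow> card X = 2 | Motzkin \<Rightarrow> card X = 1 \<or> card X = 2
      | PlanarRook \<Rightarrow> card {i. (True,i) \<in> X} \<le> 1 \<and> card {i. (False,i) \<in> X} \<le> 1)"

lemma in_alg_block_ok: "in_alg A k d \<longleftrightarrow> d \<in> Pk k \<and> planar k d \<and> (\<forall>X\<in>d. block_ok A X)"
  unfolding in_alg_def block_ok_def by (cases A) auto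

lemma block_ok_full_copy: "finite B \<Longrightarrow> B \<noteq> {} \<Longrightarrow> block_ok A (top_copy B \<union> bot_copy B) \<longleftrightarrow> card B = 1"
proof -
  assume "finite B" "B \<noteq> {}"
  then have "card B \<ge> 1" by (simp add: Suc_leI card_gt_0_iff)
  then show ?thesis using card_full_copy[OF \<open>finite B\<close>] by (cases A) (auto simp: block_ok_def)
qed

lemma block_ok_top_copy: "finite B \<Longrightarrow> B \<noteq> {} \<Longrightarrow> block_ok A (top_copy B) \<longleftrightarrow> admissible_size A (card B)"
proof -
  assume "finite B" "B \<noteq> {}"
  then have "card B \<ge> 1" by (simp add: Suc_leI card_gt_0_iff)
  then show ?thesis by (cases A) (auto simp: block_ok_def admissible_size_def)
qed

lemma block_ok_bot_copy: "finite B \<Longrightarrow> B \<noteq> {} \<Longrightarrow> block_ok A (bot_copy B) \<longleftrightarrow> admissible_size A (card B)"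
proof -
  assume "finite B" "B \<noteq> {}"
  then have "card B \<ge> 1" by (simp add: Suc_leI card_gt_0_iff)
  then show ?thesis by (cases A) (auto simp: block_ok_def admissible_size_def)
qed

lemma block_ok_symmetric_diagram:
  assumes p: "partition_on {1..k} P" and S: "S \<subseteq> P"
  shows "(\<forall>X\<in>symmetric_diagram P S. block_ok A X) \<longleftrightarrow> (\<forall>B\<in>S. card B
      = 1) \<and> (\<forall>B\<in>P-S. admissible_size A (card B))"
proof -
  have fb: "B \<in> P \<Longrightarrow> finite B \<and> B \<noteq> {}" for B
  proof -
    assume "B \<in> P"
    then have "B \<subseteq> {1..k}" "B \<noteq> {}" using p unfolding partition_on_iff by auto
    then show ?thesis by (meson finite_atLeastAtMost finite_subset)
  qed
  show ?thesis
  proof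
    assume a: "\<forall>X\<in>symmetric_diagram P S. block_ok A X"
    show "(\<forall>B\<in>S. card B = 1) \<and> (\<forall>B\<in>P-S. admissible_size A (card B))"
    proof (intro conjI ballI)
      fix B assume "B \<in> S"
      then have "block_ok A (top_copy B \<union> bot_copy B)" using a by (auto simp: symmetric_diagram_mem)
      then show "card B = 1" using block_ok_full_copy fb \<open>B \<in> S\<close> S by blast
    next
      fix B assume "B \<in> P - S"
      then have "block_ok A (top_copy B)" using a by (auto simp: symmetric_diagram_mem)
      then show "admissible_size A (card B)" using block_ok_top_copy fb \<open>B \<in> P - S\<close> by blast
    qed
  next
    assume a: "(\<forall>B\<in>S. card B = 1) \<and> (\<forall>B\<in>P-S. admissible_size A (card B))"
    show "\<forall>X\<in>symmetric_diagram P S. block_ok A X"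
    proof
      fix X assume "X \<in> symmetric_diagram P S"
      then consider B where "B \<in> S" "X = top_copy B \<union> bot_copy B" | B where "B \<in> P - S" "X = top_copy B"
        | B where "B \<in> P - S" "X = bot_copy B" by (auto simp: symmetric_diagram_mem)
      then show "block_ok A X"
      proof cases
        case 1 then show ?thesis using a fb S block_ok_full_copy by auto
      next
        case 2 then show ?thesis using a fb block_ok_top_copy by auto
      next
        case 3 then show ?thesis using a fb block_ok_bot_copy by auto
      qed
    qed
  qed
qed


lemma planarD:
  assumes "planar k d" "X1 \<in> d" "X2 \<in> d" "X1 \<noteq> X2" "a \<in> X1" "c \<in> X1" "b \<in> X2" "e \<in> X2"
    and "cpos k a < cpos k b" "cpos k b < cpos k c" "cpos k c < cpos k e"
  shows False
proof -
  have "\<not> (\<exists>a\<in>X1. \<exists>c\<in>X1. \<exists>b\<in>X2. \<exists>e\<in>X2.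
      cpos k a < cpos k b \<and> cpos k b < cpos k c \<and> cpos k c < cpos k e)"
    by (rule assms(1)[unfolded planar_def, THEN bspec, OF assms(2), THEN bspec, OF assms(3),
          THEN mp, OF assms(4)])
  moreover have "\<exists>a\<in>X1. \<exists>c\<in>X1. \<exists>b\<in>X2. \<exists>e\<in>X2.
      cpos k a < cpos k b \<and> cpos k b < cpos k c \<and> cpos k c < cpos k e"
    using assms(5-) by blast
  ultimately show False by (rule notE)
qed

lemma planarI:
  "(\<And>X1 X2 a b c e. X1 \<in> d \<Longrightarrow> X2 \<in> d \<Longrightarrow> X1 \<noteq> X2 \<Longrightarrow> a \<in> X1 \<Longrightarrow> c \<in> X1
      \<Longrightarrow> b \<in> X2 \<Longrightarrow> e \<in> X2 \<Longrightarrow> cpos k a < cpos k b \<Longrightarrow> cpos k b < cpos k c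
      \<Longrightarrow> cpos k c < cpos k e \<Longrightarrow> False) \<Longrightarrow> planar k d"
  unfolding planar_def by (intro ballI impI notI, elim bexE conjE) metis

lemma planar_symmetric_diagramD:
  assumes p: "partition_on {1..k} P" and S: "S \<subseteq> P"
    and pl: "planar k (symmetric_diagram P S)"
  shows "noncrossing P" and "marks_exposed P S"
proof -
  have blk: "B \<in> P \<Longrightarrow> B \<subseteq> {1..k}" for B using p unfolding partition_on_iff by blast
  define X where "X B = (if B \<in> S then top_copy B \<union> bot_copy B else top_copy B)" for B
  have XP: "B \<in> P \<Longrightarrow> X B \<in> symmetric_diagram P S" for B
    unfolding X_def by (auto simp: symmetric_diagram_mem)
  have Xi: "i \<in> B \<Longrightarrow> (True,i) \<in> X B" for i B unfolding X_def by auto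
  have Xne: "B1 \<noteq> B2 \<Longrightarrow> X B1 \<noteq> X B2" for B1 B2
  proof
    assume "B1 \<noteq> B2" "X B1 = X B2"
    then have "{i. (True,i) \<in> X B1} = {i. (True,i) \<in> X B2}" by simp
    then show False using \<open>B1 \<noteq> B2\<close> unfolding X_def by (auto split: if_splits)
  qed
  have nc: "noncrossing P"
  proof (rule noncrossingI)
    fix B1 B2 a b c e assume h: "B1\<in>P" "B2\<in>P" "B1\<noteq>B2" "a\<in>B1" "c\<in>B1" "b\<in>B2" "e\<in>B2" "a<b" "b<c" "c<e"
    show False
      by (rule planarD[OF pl XP[OF h(1)] XP[OF h(2)] Xne[OF h(3)] Xi[OF h(4)] Xi[OF h(5)] Xi[OF h(6)]
            Xi[OF h(7)]])
      (use h in auto)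
  qed
  have ne: "marks_exposed P S"
  proof (rule marks_exposedI)
    fix B j a c assume h: "B\<in>P" "B \<notin> S" "{j}\<in>S" "a\<in>B" "c\<in>B" "a<j" "j<c"
    have X1: "top_copy B \<in> symmetric_diagram P S" using h by (auto simp: symmetric_diagram_mem)
    have X2: "top_copy {j} \<union> bot_copy {j} \<in> symmetric_diagram P S"
      using h by (auto simp: symmetric_diagram_mem)
    have "B \<noteq> {}" using h by auto
    then have X12: "top_copy B \<noteq> top_copy {j} \<union> bot_copy {j}" by (metis full_copy_eq_top_copy)
    have "c \<le> k" "j \<le> k" using blk[OF h(1)] blk[of "{j}"] h S by auto
    show False
      by (rule planarD[OF pl X1 X2 X12, of "(True,a)" "(True,c)" "(True,j)" "(False,j)"])
        (use h \<open>c \<le> k\<close> \<open>j \<le> k\<close> in auto)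
  qed
  show "noncrossing P" "marks_exposed P S" using nc ne by simp_all
qed

lemma symmetric_diagram_block_cases:
  assumes "X \<in> symmetric_diagram P S" and "\<forall>B\<in>S. card B = 1"
  obtains B where "B \<in> P" "B \<notin> S" "X = top_copy B"
    | B where "B \<in> P" "B \<notin> S" "X = bot_copy B"
    | j where "{j} \<in> S" "X = {(True, j), (False, j)}"
proof -
  from assms(1) consider B where "B \<in> S" "X = top_copy B \<union> bot_copy B"
      | B where "B \<in> P - S" "X = top_copy B"
    | B where "B \<in> P - S" "X = bot_copy B" by (auto simp: symmetric_diagram_mem)
  then show thesis
  proof cases
    case 1
    then obtain j where "B = {j}" using assms(2) by (metis card_1_singletonE)
    then show ?thesis using 1 that(3) by (auto simp: top_copy_def bot_copy_def)
  qed (use that in blast)+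
qed

lemma symmetric_diagram_vertex:
  assumes p: "partition_on {1..k} P" and S: "S \<subseteq> P" and "X \<in> symmetric_diagram P S" and "v \<in> X"
  shows "snd v \<in> {1..k}"
proof -
  have "X \<subseteq> verts k"
    using partition_on_symmetric_diagram[OF p S] assms(3) unfolding partition_on_def by blast
  then show ?thesis using assms(4) by (auto simp: verts_def)
qed

lemma planar_symmetric_diagramI:
  assumes p: "partition_on {1..k} P" and S: "S \<subseteq> P" and sing: "\<forall>B\<in>S. card B = 1"
    and nc: "noncrossing P" and ne: "marks_exposed P S"
  shows "planar k (symmetric_diagram P S)"
proof (rule planarI)
  fix X1 X2 a b c e assume h: "X1\<in>symmetric_diagram P S" "X2\<in>symmetric_diagram P S" "X1\<noteq>X2" "a\<in>X1" "c\<in>X1"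
    "b\<in>X2" "e\<in>X2" "cpos k a < cpos k b" "cpos k b < cpos k c" "cpos k c < cpos k e"
  obtain ta ia where av: "a = (ta,ia)" by (cases a)
  obtain tb ib where bv: "b = (tb,ib)" by (cases b)
  obtain tc ic where cv: "c = (tc,ic)" by (cases c)
  obtain te ie where ev: "e = (te,ie)" by (cases e)
  have rng: "ia \<in> {1..k}" "ib \<in> {1..k}" "ic \<in> {1..k}" "ie \<in> {1..k}"
    using symmetric_diagram_vertex[OF p S h(1) h(4)] symmetric_diagram_vertex[OF p S h(1) h(5)]
      symmetric_diagram_vertex[OF p S h(2) h(6)] symmetric_diagram_vertex[OF p S h(2) h(7)] av bv cv ev
    by auto
  note pos = h(8-10)[unfolded av bv cv ev]
  show False
  proof (rule symmetric_diagram_block_cases[OF h(1) sing])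
    fix B1 assume B1: "B1 \<in> P" "B1 \<notin> S" "X1 = top_copy B1"
    then have at: "ta" "tc" "ia \<in> B1" "ic \<in> B1" using h(4,5) av cv by auto
    then have btop: "tb" using pos rng by (cases tb) auto
    show False
    proof (rule symmetric_diagram_block_cases[OF h(2) sing])
      fix B2 assume B2: "B2 \<in> P" "B2 \<notin> S" "X2 = top_copy B2"
      then have "te" "ib \<in> B2" "ie \<in> B2" using h(6,7) bv ev by auto
      then show False using noncrossingD[OF nc B1(1) B2(1) _ at(3) at(4) \<open>ib \<in> B2\<close> \<open>ie \<in> B2\<close>]
        h(3) B1 B2 pos at btop by auto
    next
      fix B2 assume "X2 = bot_copy B2" then show False using h(6) bv btop by auto
    next
      fix j assume j: "{j} \<in> S" "X2 = {(True,j),(False,j)}"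
      then have "ib = j" using h(6) bv btop by auto
      then show False using marks_exposedD[OF ne B1(1) B1(2) j(1) at(3) at(4)] pos at btop by auto
    qed
  next
    fix B1 assume B1: "B1 \<in> P" "B1 \<notin> S" "X1 = bot_copy B1"
    then have at: "\<not>ta" "\<not>tc" "ia \<in> B1" "ic \<in> B1" using h(4,5) av cv by auto
    then have bbot: "\<not>tb" using pos rng by (cases tb) auto
    then have ebot: "\<not>te" using pos rng at by (cases te) auto
    show False
    proof (rule symmetric_diagram_block_cases[OF h(2) sing])
      fix B2 assume "X2 = top_copy B2" then show False using h(6) bv bbot by auto
    next
      fix B2 assume B2: "B2 \<in> P" "B2 \<notin> S" "X2 = bot_copy B2"
      then have "ib \<in> B2" "ie \<in> B2" using h(6,7) bv ev by auto
      have "B2 \<noteq> B1" using h(3) B1 B2 by auto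
      moreover have "ie < ic" "ic < ib" "ib < ia" using pos at bbot ebot rng by auto
      ultimately show False
        using noncrossingD[OF nc B2(1) B1(1) \<open>B2 \<noteq> B1\<close> \<open>ie \<in> B2\<close> \<open>ib \<in> B2\<close> at(4) at(3)]
        by blast
    next
      fix j assume j: "{j} \<in> S" "X2 = {(True,j),(False,j)}"
      then show False using h(6,7) bv ev bbot ebot pos by auto
    qed
  next
    fix j assume j: "{j} \<in> S" "X1 = {(True,j),(False,j)}"
    then have aj: "a = (True,j)" "c = (False,j)" using h(4,5) pos av cv rng by auto
    have jk: "j \<in> {1..k}" using rng aj av by auto
    have ebot: "\<not>te" "ie < j" using pos aj ev cv rng jk by (cases te; auto)+
    show False
    proof (rule symmetric_diagram_block_cases[OF h(2) sing])
      fix B2 assume "X2 = top_copy B2" then show False using h(7) ev ebot by auto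
    next
      fix B2 assume B2: "B2 \<in> P" "B2 \<notin> S" "X2 = bot_copy B2"
      then have "\<not> tb" "ib \<in> B2" "ie \<in> B2" using h(6,7) bv ev by auto
      then have "j < ib" using pos aj av cv rng jk by auto
      then show False using marks_exposedD[OF ne B2(1) B2(2) j(1) \<open>ie \<in> B2\<close> \<open>ib \<in> B2\<close>] ebot by auto
    next
      fix l assume l: "{l} \<in> S" "X2 = {(True,l),(False,l)}"
      then have "e = (False,l)" using h(7) ebot ev by auto
      then show False using h(6) l pos aj bv ev cv av rng jk by auto
    qed
  qed
qed

lemma in_alg_symmetric_diagram:
  assumes p: "partition_on {1..k} P" and S: "S \<subseteq> P"
  shows "in_alg A k (symmetric_diagram P S) \<longleftrightarrow> half_diagram A k P S"
proof -
  have pk: "symmetric_diagram P S \<in> Pk k"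
    using partition_on_symmetric_diagram[OF p S] by (simp add: Pk_def)
  show ?thesis
  proof
    assume "in_alg A k (symmetric_diagram P S)"
    then have pl: "planar k (symmetric_diagram P S)" and bl: "\<forall>X\<in>symmetric_diagram P S. block_ok A X"
      by (auto simp: in_alg_block_ok)
    then have sb: "(\<forall>B\<in>S. card B = 1) \<and> (\<forall>B\<in>P-S. admissible_size A (card B))"
      using block_ok_symmetric_diagram[OF p S] by blast
    then show "half_diagram A k P S"
      using p S planar_symmetric_diagramD[OF p S pl] by (simp add: half_diagram_def)
  next
    assume g: "half_diagram A k P S"
    then have sb: "(\<forall>B\<in>S. card B = 1) \<and> (\<forall>B\<in>P-S. admissible_size A (card B))"
      by (simp add: half_diagram_def)
    then have "\<forall>X\<in>symmetric_diagram P S. block_ok A X" using block_ok_symmetric_diagram[OF p S] by blast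
    moreover have "planar k (symmetric_diagram P S)"
      using planar_symmetric_diagramI[OF p S] sb g by (simp add: half_diagram_def)
    ultimately show "in_alg A k (symmetric_diagram P S)" using pk by (simp add: in_alg_block_ok)
  qed
qed

lemma module_basis_eq:
  "module_basis A k m = {symmetric_diagram P S | P S. half_diagram A k P S \<and> card S = m}"
  unfolding module_basis_def sym_diag_iff
  using in_alg_symmetric_diagram by (auto simp: half_diagram_def) blast+


lemma transp_symmetric_diagram: "transp_diag (symmetric_diagram P S) = symmetric_diagram P S"
proof -
  have "(\<lambda>(b, i). (\<not> b, i)) ` top_copy B = bot_copy B"
      "(\<lambda>(b, i). (\<not> b, i)) ` bot_copy B = top_copy B" for B
    by (auto simp: top_copy_def bot_copy_def image_image)
  then show ?thesis unfolding transp_diag_def symmetric_diagram_def image_Un image_image by auto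
qed

lemma nprop_symmetric_diagram:
  assumes p: "partition_on A P" and S: "S \<subseteq> P"
  shows "nprop (symmetric_diagram P S) = card S"
proof -
  have ne: "B \<in> P \<Longrightarrow> B \<noteq> {}" for B using p unfolding partition_on_def by blast
  have "{X \<in> symmetric_diagram P S. (\<exists>i. (True,i) \<in> X) \<and> (\<exists>i. (False,i) \<in> X)}
      = (\<lambda>B. top_copy B \<union> bot_copy B) ` S"
  proof (rule set_eqI, rule iffI)
    fix X assume X: "X \<in> {X \<in> symmetric_diagram P S. (\<exists>i. (True,i) \<in> X) \<and> (\<exists>i. (False,i) \<in> X)}"
    then consider B where "B \<in> S" "X = top_copy B \<union> bot_copy B" | B where "B \<in> P - S" "X = top_copy B"
        | B where "B \<in> P - S" "X = bot_copy B" unfolding symmetric_diagram_mem by blast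
    then show "X \<in> (\<lambda>B. top_copy B \<union> bot_copy B) ` S" using X by cases auto
  next
    fix X assume "X \<in> (\<lambda>B. top_copy B \<union> bot_copy B) ` S"
    then obtain B where B: "B \<in> S" "X = top_copy B \<union> bot_copy B" by auto
    then obtain i where "i \<in> B" using ne S by blast
    then show "X \<in> {X \<in> symmetric_diagram P S. (\<exists>i. (True,i) \<in> X) \<and> (\<exists>i. (False,i) \<in> X)}"
      using B by (auto simp: symmetric_diagram_mem)
  qed
  moreover have "inj_on (\<lambda>B. top_copy B \<union> bot_copy B) S" by (rule inj_onI) simp
  ultimately show ?thesis unfolding nprop_def by (simp add: card_image)
qed

lemma symmetric_diagram_inj:
  assumes p1: "partition_on A1 P1" and S1: "S1 \<subseteq> P1" and p2: "partition_on A2 P2" and S2: "S2 \<subseteq> P2"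
    and eq: "symmetric_diagram P1 S1 = symmetric_diagram P2 S2"
  shows "P1 = P2 \<and> S1 = S2"
proof -
  have recS: "partition_on A P \<Longrightarrow> S \<subseteq> P \<Longrightarrow> S
      = {B. B \<noteq> {} \<and> top_copy B \<union> bot_copy B \<in> symmetric_diagram P S}" for A P S
  proof -
    assume p: "partition_on A P" "S \<subseteq> P"
    then have ne: "B \<in> P \<Longrightarrow> B \<noteq> {}" for B unfolding partition_on_def by blast
    show ?thesis using p ne by (auto simp: symmetric_diagram_mem)
  qed
  have recP: "partition_on A P \<Longrightarrow> S \<subseteq> P \<Longrightarrow> P
      = {B. B \<noteq> {} \<and> (top_copy B \<in> symmetric_diagram P S \<or> top_copy B \<union> bot_copy B \<in> symmetric_diagram P S)}" for A P S
  proof -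
    assume p: "partition_on A P" "S \<subseteq> P"
    then have ne: "B \<in> P \<Longrightarrow> B \<noteq> {}" for B unfolding partition_on_def by blast
    show ?thesis using p ne by (auto simp: symmetric_diagram_mem)
  qed
  show ?thesis using recS[OF p1 S1] recS[OF p2 S2] recP[OF p1 S1] recP[OF p2 S2] eq by metis
qed

lemma top_copy_in_symmetric_diagram:
  "partition_on A P \<Longrightarrow> S \<subseteq> P \<Longrightarrow> E \<noteq> {} \<Longrightarrow> top_copy E \<in> symmetric_diagram P S \<Longrightarrow> E \<in> P - S"
  by (auto simp: symmetric_diagram_mem)
section \<open>Composition of diagrams\<close>

lemma stack_rel_sym: "sym (stack_rel d1 d2)"
  unfolding sym_def stack_rel_def by blast

lemma rtrancl_stack_rel_sym: "(x,y) \<in> (stack_rel d1 d2)\<^sup>* \<Longrightarrow> (y,x) \<in> (stack_rel d1 d2)\<^sup>*"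
  using sym_rtrancl[OF stack_rel_sym, of d1 d2] unfolding sym_def by blast

lemma components_iff: "C \<in> components d1 d2 \<longleftrightarrow> (\<exists>x\<in>stack_verts d1 d2. C = (stack_rel d1 d2)\<^sup>* `` {x})"
  unfolding components_def quotient_def by blast

lemma components_disjoint:
  assumes "C1 \<in> components d1 d2" "C2 \<in> components d1 d2" "x \<in> C1" "x \<in> C2"
  shows "C1 = C2"
proof -
  let ?R = "(stack_rel d1 d2)\<^sup>*"
  obtain x1 x2 where c: "C1 = ?R `` {x1}" "C2 = ?R `` {x2}"
    using assms(1,2) by (auto simp: components_iff)
  have "(x1,x) \<in> ?R" "(x2,x) \<in> ?R" using assms(3,4) c by auto
  then have x12: "(x1,x2) \<in> ?R" using rtrancl_stack_rel_sym by (meson rtrancl_trans)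
  then have x21: "(x2,x1) \<in> ?R" using rtrancl_stack_rel_sym by blast
  show ?thesis unfolding c using x12 x21 by (auto intro: rtrancl_trans)
qed

lemma components_eqI:
  assumes sub: "\<forall>C\<in>Cs. C \<subseteq> stack_verts d1 d2 \<and> C \<noteq> {}"
    and cov: "\<forall>x\<in>stack_verts d1 d2. \<exists>C\<in>Cs. x\<in>C"
    and disj: "\<forall>C1\<in>Cs. \<forall>C2\<in>Cs. \<forall>x. x\<in>C1 \<longrightarrow> x\<in>C2 \<longrightarrow> C1=C2"
    and edge: "\<forall>x y. (x,y) \<in> stack_rel d1 d2 \<longrightarrow> (\<exists>C\<in>Cs. x\<in>C \<and> y\<in>C)"
    and conn: "\<forall>C\<in>Cs. \<forall>x\<in>C. \<forall>y\<in>C. (x,y) \<in> (stack_rel d1 d2)\<^sup>*"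
  shows "components d1 d2 = Cs"
proof -
  let ?R = "(stack_rel d1 d2)\<^sup>*"
  have key: "C \<in> Cs \<Longrightarrow> x \<in> C \<Longrightarrow> ?R `` {x} = C" for C x
  proof -
    assume C: "C \<in> Cs" "x \<in> C"
    have "(x,y) \<in> ?R \<Longrightarrow> y \<in> C" for y
    proof (induction rule: rtrancl_induct)
      case base then show ?case using C by simp
    next
      case (step y z)
      then obtain C' where "C' \<in> Cs" "y \<in> C'" "z \<in> C'" using edge by blast
      then show ?case using disj C step by blast
    qed
    moreover have "y \<in> C \<Longrightarrow> (x,y) \<in> ?R" for y using conn C by blast
    ultimately show ?thesis by blast
  qed
  show ?thesis
  proof (rule set_eqI, rule iffI)
    fix C assume "C \<in> components d1 d2"
    then obtain x where x: "x \<in> stack_verts d1 d2" "C = ?R `` {x}" by (auto simp: components_iff)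
    then obtain C' where "C' \<in> Cs" "x \<in> C'" using cov by blast
    then show "C \<in> Cs" using key x by simp
  next
    fix C assume C: "C \<in> Cs"
    then obtain x where "x \<in> C" using sub by blast
    then have "x \<in> stack_verts d1 d2" "C = ?R `` {x}" using key C sub by auto
    then show "C \<in> components d1 d2" by (auto simp: components_iff)
  qed
qed

lemma up3_top: "fst v \<Longrightarrow> up3 v = (0, snd v)" by (cases v) auto
lemma back3_up3_top: "fst v \<Longrightarrow> back3 (up3 v) = v" by (cases v) auto
lemma up3_inj: "up3 v = up3 w \<Longrightarrow> v = w" by (cases v; cases w) (auto split: if_splits)
lemma dn3_fst: "fst (dn3 v) \<noteq> 0" by (cases v) auto

lemma stack_relI1: "B \<in> d1 \<Longrightarrow> x \<in> up3 ` B \<Longrightarrow> y \<in> up3 ` B \<Longrightarrow> (x,y) \<in> stack_rel d1 d2"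
  unfolding stack_rel_def by blast
lemma stack_relI2: "B \<in> d2 \<Longrightarrow> x \<in> dn3 ` B \<Longrightarrow> y \<in> dn3 ` B \<Longrightarrow> (x,y) \<in> stack_rel d1 d2"
  unfolding stack_rel_def by blast

lemma comp_diag_eq_image:
  "comp_diag d1 d2
      = (\<lambda>C. back3 ` (C \<inter> {v. fst v \<noteq> 1})) ` {C \<in> components d1 d2. C \<inter> {v. fst v \<noteq> 1} \<noteq> {}}"
  unfolding comp_diag_def by (simp add: setcompr_eq_image)

lemma component_of_top_row_block:
  assumes B: "B \<in> d1" "\<forall>v\<in>B. fst v" and uq: "\<forall>B'\<in>d1. B' \<inter> B \<noteq> {} \<longrightarrow> B' = B"
    and v0: "v0 \<in> B"
  shows "(stack_rel d1 d2)\<^sup>* `` {up3 v0} = up3 ` B"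
proof -
  have "y \<in> up3 ` B" if "(up3 v0, y) \<in> (stack_rel d1 d2)\<^sup>*" for y
    using that
  proof (induction rule: rtrancl_induct)
    case base then show ?case using v0 by simp
  next
    case (step y z)
    then obtain v where v: "v \<in> B" "y = up3 v" by auto
    from step(2) show ?case unfolding stack_rel_def
    proof (elim CollectE case_prodE disjE bexE conjE)
      fix B' a b assume h: "(y, z) = (a, b)" "B' \<in> d1" "a \<in> up3 ` B'" "b \<in> up3 ` B'"
      then obtain v' where "v' \<in> B'" "up3 v' = y" by auto
      then have "v' = v" using v up3_inj by auto
      then have "B' = B" using uq h(2) \<open>v' \<in> B'\<close> v by blast
      then show ?thesis using h by auto
    next
      fix B' a b assume h: "(y, z) = (a, b)" "B' \<in> d2" "a \<in> dn3 ` B'" "b \<in> dn3 ` B'"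
      then obtain v' where "up3 v = dn3 v'" using v by auto
      moreover have "fst (up3 v) = 0" using B(2) v up3_top[of v] by auto
      ultimately show ?thesis using dn3_fst[of v'] by simp
    qed
  qed
  moreover have "(up3 v0, y) \<in> (stack_rel d1 d2)\<^sup>*" if "y \<in> up3 ` B" for y
    using stack_relI1[OF B(1) _ that, of "up3 v0" d2] v0 by blast
  ultimately show ?thesis by blast
qed

lemma top_row_block_comp_diag:
  assumes B: "B \<in> d1" "B \<noteq> {}" "\<forall>v\<in>B. fst v" and uq: "\<forall>B'\<in>d1. B' \<inter> B \<noteq> {} \<longrightarrow> B' = B"
  shows "B \<in> comp_diag d1 d2 \<and> (\<forall>B'\<in>comp_diag d1 d2. B' \<inter> B \<noteq> {} \<longrightarrow> B' = B)"
proof -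
  obtain v0 where v0: "v0 \<in> B" using B by auto
  define C0 where "C0 = (stack_rel d1 d2)\<^sup>* `` {up3 v0}"
  have C0: "C0 = up3 ` B" unfolding C0_def using component_of_top_row_block[OF B(1,3) uq v0] .
  have "up3 v0 \<in> stack_verts d1 d2" using v0 B unfolding stack_verts_def by auto
  then have C0c: "C0 \<in> components d1 d2" unfolding C0_def by (auto simp: components_iff)
  have nm: "C0 \<inter> {v. fst v \<noteq> 1} = C0" using C0 B(3) up3_top by auto
  have bk: "back3 ` C0 = B" using C0 B(3) back3_up3_top by (auto simp: image_image)
  have "C0 \<in> {C \<in> components d1 d2. C \<inter> {v. fst v \<noteq> 1} \<noteq> {}}" using C0c nm C0 B(2) by auto
  then have "B \<in> comp_diag d1 d2" unfolding comp_diag_eq_image by (rule rev_image_eqI) (simp only: nm bk)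
  moreover have "B' = B" if B': "B' \<in> comp_diag d1 d2" "B' \<inter> B \<noteq> {}" for B'
  proof -
    obtain C where C: "C \<in> components d1 d2" "B' = back3 ` (C \<inter> {v. fst v \<noteq> 1})"
      using B'(1) unfolding comp_diag_def by blast
    obtain v where "v \<in> B'" "v \<in> B" using B'(2) by auto
    then obtain y where y: "y \<in> C" "fst y \<noteq> 1" "back3 y = v" using C by auto
    have "fst v" using B(3) \<open>v \<in> B\<close> by auto
    then have "y = up3 v" using y up3_top[of v] by (cases y) (auto split: if_splits)
    then have "y \<in> C0" using C0 \<open>v \<in> B\<close> by auto
    then have "C = C0" using components_disjoint[OF C(1) C0c] y by auto
    then show "B' = B" using C nm bk by simp
  qed
  ultimately show ?thesis by blast
qed

lemma stack_verts_full:
  assumes "partition_on (verts k) d1" "partition_on (verts k) d2"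
  shows "stack_verts d1 d2 = {(a,i). a \<le> (2::nat) \<and> i \<in> {1..k}}"
proof -
  have u1: "\<Union>d1 = verts k" "\<Union>d2 = verts k" using assms by (auto simp: partition_on_def)
  have "stack_verts d1 d2 = up3 ` (\<Union>d1) \<union> dn3 ` (\<Union>d2)" unfolding stack_verts_def by auto
  also have "\<dots> = up3 ` verts k \<union> dn3 ` verts k" using u1 by simp
  also have "\<dots> = {(a,i). a \<le> (2::nat) \<and> i \<in> {1..k}}"
  proof (rule set_eqI, rule iffI)
    fix x assume "x \<in> up3 ` verts k \<union> dn3 ` verts k"
    then show "x \<in> {(a,i). a \<le> (2::nat) \<and> i \<in> {1..k}}" by (auto simp: verts_def)
  next
    fix x assume "x \<in> {(a,i). a \<le> (2::nat) \<and> i \<in> {1..k}}"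
    then obtain a i where x: "x = (a,i)" "a \<le> (2::nat)" "i \<in> {1..k}" by auto
    then consider "a = 0" | "a = 1" | "a = 2" by linarith
    then show "x \<in> up3 ` verts k \<union> dn3 ` verts k"
    proof cases
      case 1 then have "x = up3 (True,i)" using x by simp
      then show ?thesis using x by (intro UnI1 image_eqI[of _ _ "(True,i)"]) (auto simp: verts_def)
    next
      case 2 then have "x = up3 (False,i)" using x by simp
      then show ?thesis using x by (intro UnI1 image_eqI[of _ _ "(False,i)"]) (auto simp: verts_def)
    next
      case 3 then have "x = dn3 (False,i)" using x by simp
      then show ?thesis using x by (intro UnI2 image_eqI[of _ _ "(False,i)"]) (auto simp: verts_def)
    qed
  qed
  finally show ?thesis .
qed

lemma up3_top_copy: "up3 ` top_copy E = {(0,i) | i. i \<in> E}" by (auto simp: top_copy_def image_image)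
lemma dn3_top_copy: "dn3 ` top_copy E = {(1,i) | i. i \<in> E}" by (auto simp: top_copy_def image_image)
lemma up3_bot_copy: "up3 ` bot_copy E = {(1,i) | i. i \<in> E}" by (auto simp: bot_copy_def image_image)

lemma dn3_mem: "(a,i) \<in> dn3 ` X \<longleftrightarrow> (a = 1 \<and> (True,i) \<in> X) \<or> (a = 2 \<and> (False,i) \<in> X)"
proof
  assume "(a,i) \<in> dn3 ` X"
  then obtain v where "v \<in> X" "dn3 v = (a,i)" by auto
  then show "(a = 1 \<and> (True,i) \<in> X) \<or> (a = 2 \<and> (False,i) \<in> X)" by (cases v) (auto split: if_splits)
next
  assume "(a = 1 \<and> (True,i) \<in> X) \<or> (a = 2 \<and> (False,i) \<in> X)"
  then show "(a,i) \<in> dn3 ` X" by (auto intro: image_eqI[of _ _ "(True,i)"] image_eqI[of _ _ "(False,i)"])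
qed

lemma up3_mem: "(a,i) \<in> up3 ` X \<longleftrightarrow> (a = 0 \<and> (True,i) \<in> X) \<or> (a = 1 \<and> (False,i) \<in> X)"
proof
  assume "(a,i) \<in> up3 ` X"
  then obtain v where "v \<in> X" "up3 v = (a,i)" by auto
  then show "(a = 0 \<and> (True,i) \<in> X) \<or> (a = 1 \<and> (False,i) \<in> X)" by (cases v) (auto split: if_splits)
next
  assume "(a = 0 \<and> (True,i) \<in> X) \<or> (a = 1 \<and> (False,i) \<in> X)"
  then show "(a,i) \<in> up3 ` X" by (auto intro: image_eqI[of _ _ "(True,i)"] image_eqI[of _ _ "(False,i)"])
qed


text \<open>Reflecting the stacked picture of \<open>d\<^sub>1\<close> over \<open>d\<^sub>2\<close> in its middle row gives the stacked
  picture of \<open>d\<^sub>2\<^sup>T\<close> over \<open>d\<^sub>1\<^sup>T\<close>; hence \<open>(d\<^sub>1 \<circ> d\<^sub>2)\<^sup>T = d\<^sub>2\<^sup>T \<circ> d\<^sub>1\<^sup>T\<close>.\<close>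

definition flip_vtx :: "vtx \<Rightarrow> vtx" where
  "flip_vtx = (\<lambda>(b, i). (\<not> b, i))"

definition flip_row :: "nat \<times> nat \<Rightarrow> nat \<times> nat" where
  "flip_row = (\<lambda>(a, i). (if a = 0 then 2 else if a = 2 then 0 else a, i))"

lemma flip_vtx_flip_vtx [simp]: "flip_vtx (flip_vtx v) = v"
  by (cases v) (simp add: flip_vtx_def)

lemma flip_row_flip_row [simp]: "flip_row (flip_row x) = x"
  by (cases x) (simp add: flip_row_def)

lemma flip_row_up3: "flip_row (up3 v) = dn3 (flip_vtx v)"
  and flip_row_dn3: "flip_row (dn3 v) = up3 (flip_vtx v)"
  by (cases v; simp add: flip_row_def flip_vtx_def)+

lemma transp_diag_eq: "transp_diag d = (`) flip_vtx ` d"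
  by (simp add: transp_diag_def flip_vtx_def)

lemma mem_image_flip_row: "x \<in> flip_row ` X \<longleftrightarrow> flip_row x \<in> X"
  by (metis flip_row_flip_row image_iff)

lemma up3_image_flip_vtx: "up3 ` flip_vtx ` B = flip_row ` dn3 ` B"
  and dn3_image_flip_vtx: "dn3 ` flip_vtx ` B = flip_row ` up3 ` B"
  by (simp_all add: image_image flip_row_up3 flip_row_dn3)

lemma stack_verts_transp:
  "stack_verts (transp_diag d2) (transp_diag d1) = flip_row ` stack_verts d1 d2"
  unfolding stack_verts_def transp_diag_eq image_Un image_UN
  by (simp add: up3_image_flip_vtx dn3_image_flip_vtx Un_commute)

lemma stack_rel_transp:
  "(x, y) \<in> stack_rel (transp_diag d2) (transp_diag d1) \<longleftrightarrow> (flip_row x, flip_row y) \<in> stack_rel d1 d2"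
  unfolding stack_rel_def transp_diag_eq
  by (simp add: up3_image_flip_vtx dn3_image_flip_vtx mem_image_flip_row disj_commute)

lemma rtrancl_stack_rel_transp:
  "(x, y) \<in> (stack_rel (transp_diag d2) (transp_diag d1))\<^sup>*
      \<longleftrightarrow> (flip_row x, flip_row y) \<in> (stack_rel d1 d2)\<^sup>*"
proof
  show "(flip_row x, flip_row y) \<in> (stack_rel d1 d2)\<^sup>*"
    if "(x, y) \<in> (stack_rel (transp_diag d2) (transp_diag d1))\<^sup>*"
    using that by induction (auto simp: stack_rel_transp intro: rtrancl_into_rtrancl)
  have "(flip_row u, flip_row v) \<in> (stack_rel (transp_diag d2) (transp_diag d1))\<^sup>*"
    if "(u, v) \<in> (stack_rel d1 d2)\<^sup>*" for u v
    using that by induction (auto simp: stack_rel_transp intro: rtrancl_into_rtrancl)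
  then show "(x, y) \<in> (stack_rel (transp_diag d2) (transp_diag d1))\<^sup>*"
    if "(flip_row x, flip_row y) \<in> (stack_rel d1 d2)\<^sup>*"
    using that by fastforce
qed

lemma components_transp:
  "components (transp_diag d2) (transp_diag d1) = (`) flip_row ` components d1 d2"
proof -
  let ?R = "(stack_rel d1 d2)\<^sup>*" and ?Q = "(stack_rel (transp_diag d2) (transp_diag d1))\<^sup>*"
  have rel_class: "?Q `` {flip_row x} = flip_row ` (?R `` {x})" for x
    by (auto simp: rtrancl_stack_rel_transp mem_image_flip_row)
  have "components (transp_diag d2) (transp_diag d1) = (\<lambda>x. ?Q `` {x}) ` flip_row ` stack_verts d1 d2"
    unfolding components_def quotient_def stack_verts_transp by blast
  also have "\<dots> = (\<lambda>x. flip_row ` (?R `` {x})) ` stack_verts d1 d2"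
    by (simp add: image_image rel_class)
  also have "\<dots> = (`) flip_row ` components d1 d2"
    unfolding components_def quotient_def by blast
  finally show ?thesis .
qed

lemma components_rows: "C \<in> components d1 d2 \<Longrightarrow> x \<in> C \<Longrightarrow> fst x \<le> 2"
proof -
  have edge: "fst y \<le> 2" if "(x, y) \<in> stack_rel d1 d2" for x y
    using that unfolding stack_rel_def by (auto elim!: up3.elims dn3.elims)
  have "fst y \<le> 2" if "(x, y) \<in> (stack_rel d1 d2)\<^sup>*" "x \<in> stack_verts d1 d2" for x y
    using that by induction (auto simp: stack_verts_def edge elim!: up3.elims dn3.elims)
  then show "C \<in> components d1 d2 \<Longrightarrow> x \<in> C \<Longrightarrow> fst x \<le> 2"
    unfolding components_def quotient_def by blast
qed

lemma back3_flip_row: "fst x \<le> 2 \<Longrightarrow> fst x \<noteq> 1 \<Longrightarrow> back3 (flip_row x) = flip_vtx (back3 x)"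
  by (cases x) (auto simp: flip_row_def flip_vtx_def)

lemma comp_diag_transp:
  "comp_diag (transp_diag d2) (transp_diag d1) = transp_diag (comp_diag d1 d2)"
proof -
  let ?M = "{v. fst v \<noteq> 1}" and ?K = "{C \<in> components d1 d2. C \<inter> {v. fst v \<noteq> 1} \<noteq> {}}"
  have mid: "flip_row ` C \<inter> ?M = flip_row ` (C \<inter> ?M)" for C
    by (auto simp: flip_row_def split: if_splits)
  have back_flip: "back3 ` (flip_row ` C \<inter> ?M) = flip_vtx ` back3 ` (C \<inter> ?M)"
    if "C \<in> components d1 d2" for C
  proof -
    have "back3 (flip_row x) = flip_vtx (back3 x)" if "x \<in> C \<inter> ?M" for x
      using back3_flip_row components_rows[OF \<open>C \<in> components d1 d2\<close>] that by simp
    then show ?thesis unfolding mid image_image by simp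
  qed
  have "{C \<in> (`) flip_row ` components d1 d2. C \<inter> ?M \<noteq> {}} = (`) flip_row ` ?K"
  proof -
    have filter_image: "{C \<in> f ` A. P C} = f ` {C \<in> A. P (f C)}"
      for f :: "(nat \<times> nat) set \<Rightarrow> (nat \<times> nat) set" and A P
      by blast
    show ?thesis by (simp only: filter_image mid image_is_empty)
  qed
  then have "comp_diag (transp_diag d2) (transp_diag d1) = (\<lambda>C. back3 ` (flip_row ` C \<inter> ?M)) ` ?K"
    unfolding comp_diag_eq_image components_transp by (simp add: image_image)
  also have "\<dots> = (\<lambda>C. flip_vtx ` back3 ` (C \<inter> ?M)) ` ?K"
    using back_flip by simp
  also have "\<dots> = transp_diag (comp_diag d1 d2)"
    unfolding comp_diag_eq_image transp_diag_eq by (simp add: image_image)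
  finally show ?thesis .
qed

section \<open>Top blocks of \<open>e\<close> absorbed by a basis diagram\<close>

definition singletons :: "nat \<Rightarrow> nat set set" where
  "singletons r = (\<lambda>i. {i}) ` {1..r}"

locale absorption =
  fixes k r :: nat and P S F :: "nat set set"
  assumes P_partition: "partition_on {1..k} P" and S_subset: "S \<subseteq> P" and F_subset: "F \<subseteq> P - S"
    and F_range: "\<forall>E\<in>F. E \<subseteq> {r + 1..k}" and D_partition_blocks: "partition_on {1..k} (singletons r \<union> F)"
    and r_le_k: "r \<le> k"
begin

definition w :: diagram where
  "w = symmetric_diagram P S"

definition D :: diagram where
  "D = symmetric_diagram (singletons r \<union> F) (singletons r)"

lemma w_partition:
  "partition_on (verts k) w" unfolding w_def using partition_on_symmetric_diagram[OF P_partition S_subset] .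
lemma D_partition:
  "partition_on (verts k) D" unfolding D_def using partition_on_symmetric_diagram[OF D_partition_blocks] by auto

lemma w_disjoint: "X1 \<in> w \<Longrightarrow> X2 \<in> w \<Longrightarrow> v \<in> X1 \<Longrightarrow> v \<in> X2 \<Longrightarrow> X1 = X2"
  using partition_on_disjoint[OF w_partition] by blast
lemma w_cover: "v \<in> verts k \<Longrightarrow> \<exists>X\<in>w. v \<in> X"
  using partition_on_cover[OF w_partition] by blast
lemma w_block: "X \<in> w \<Longrightarrow> X \<subseteq> verts k \<and> X \<noteq> {}"
  using partition_on_block[OF w_partition] by blast

lemma F_nonempty: "E \<in> F \<Longrightarrow> E \<noteq> {}" using partition_on_block[OF D_partition_blocks] by blast
lemma F_disjoint:
  "E1 \<in> F \<Longrightarrow> E2 \<in> F \<Longrightarrow> i \<in> E1 \<Longrightarrow> i \<in> E2 \<Longrightarrow> E1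
      = E2" using partition_on_disjoint[OF D_partition_blocks] by blast
lemma F_cover: "i \<in> {r+1..k} \<Longrightarrow> \<exists>E\<in>F. i \<in> E"
proof -
  assume i: "i \<in> {r+1..k}"
  then have "i \<in> {1..k}" by auto
  then obtain B where "B \<in> singletons r \<union> F" "i \<in> B"
    using partition_on_cover[OF D_partition_blocks] by blast
  then show ?thesis using i by (auto simp: singletons_def)
qed

lemma top_copy_F_in_w:
  "E \<in> F \<Longrightarrow> top_copy E \<in> w" using F_subset unfolding w_def by (auto simp: symmetric_diagram_mem)

lemma w_block_of_vertex:
  "X \<in> w \<Longrightarrow> v \<in> X \<Longrightarrow> \<exists>B\<in>P. snd v \<in> B \<and> (B \<in> S \<and> X = top_copy B \<union> bot_copy B \<or> B \<notin> S \<and> X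
      = top_copy B \<and> fst v \<or> B \<notin> S \<and> X = bot_copy B \<and> \<not> fst v)"
proof -
  assume "X \<in> w" "v \<in> X"
  moreover obtain t i where v: "v = (t,i)" by (cases v)
  ultimately consider B where "B \<in> S" "X = top_copy B \<union> bot_copy B"
      | B where "B \<in> P - S" "X = top_copy B"
    | B where "B \<in> P - S" "X = bot_copy B" unfolding w_def symmetric_diagram_mem by blast
  then show ?thesis using S_subset \<open>v \<in> X\<close> v by cases auto
qed

lemma w_block_right_top: "X \<in> w \<Longrightarrow> (True,i) \<in> X \<Longrightarrow> r < i \<Longrightarrow> \<exists>E\<in>F. X = top_copy E"
proof -
  assume X: "X \<in> w" "(True,i) \<in> X" "r < i"
  have "i \<in> {1..k}" using w_block[OF X(1)] X(2) by (auto simp: verts_def)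
  then have "i \<in> {r+1..k}" using X(3) by auto
  then obtain E where E: "E \<in> F" "i \<in> E" using F_cover by blast
  obtain B where B: "B \<in> P" "i \<in> B"
      "B \<in> S \<and> X = top_copy B \<union> bot_copy B \<or> B \<notin> S \<and> X = top_copy B \<or> B \<notin> S \<and> X = bot_copy B"
    using w_block_of_vertex[OF X(1,2)] by auto
  have "E \<in> P" "E \<notin> S" using E F_subset by auto
  then have "B = E" using partition_on_disjoint[OF P_partition] B E by blast
  then show ?thesis using B(3) X(2) \<open>E \<notin> S\<close> E by auto
qed

lemma D_block_cases:
  "X \<in> D \<Longrightarrow> (\<exists>i\<in>{1..r}. X = {(True,i),(False,i)}) \<or> (\<exists>E\<in>F. X = top_copy E) \<or> (\<exists>E\<in>F. X = bot_copy E)"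
  unfolding D_def symmetric_diagram_mem by (auto simp: singletons_def top_copy_def bot_copy_def)

lemma D_vertical: "i \<in> {1..r} \<Longrightarrow> {(True,i),(False,i)} \<in> D"
proof -
  assume "i \<in> {1..r}"
  then have "{i} \<in> singletons r" by (auto simp: singletons_def)
  moreover have "top_copy {i} \<union> bot_copy {i} = {(True,i),(False,i)}"
    by (auto simp: top_copy_def bot_copy_def)
  ultimately show ?thesis unfolding D_def symmetric_diagram_mem by blast
qed

lemma D_top_copy: "E \<in> F \<Longrightarrow> top_copy E \<in> D" and D_bot_copy: "E \<in> F \<Longrightarrow> bot_copy E \<in> D"
proof -
  assume "E \<in> F"
  moreover have "E \<notin> singletons r" using \<open>E \<in> F\<close> F_range F_nonempty by (force simp: singletons_def)
  ultimately show "top_copy E \<in> D" "bot_copy E \<in> D" unfolding D_def symmetric_diagram_mem by blast+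
qed


text \<open>The components of \<open>D\<close> stacked over \<open>w\<close>: a block \<open>X\<close> of \<open>w\<close> other than some \<open>top_copy E\<close>,
  \<open>E \<in> F\<close>, gives the component \<open>column_class X\<close> (it reaches the top row through the vertical lines
  of \<open>D\<close>); each \<open>E \<in> F\<close> gives the top block \<open>top_class E\<close> of \<open>D\<close> and the closed loop
  \<open>middle_class E\<close> where the bottom block of \<open>D\<close> meets the top block of \<open>w\<close> at \<open>E\<close>.\<close>

definition column_class :: "vtx set \<Rightarrow> (nat \<times> nat) set" where
  "column_class X = dn3 ` X \<union> {(0, i) | i. (True, i) \<in> X}"

definition top_class :: "nat set \<Rightarrow> (nat \<times> nat) set" where
  "top_class E = {(0, i) | i. i \<in> E}"

definition middle_class :: "nat set \<Rightarrow> (nat \<times> nat) set" where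
  "middle_class E = {(1, i) | i. i \<in> E}"

definition stack_classes :: "(nat \<times> nat) set set" where
  "stack_classes = column_class ` (w - top_copy ` F) \<union> top_class ` F \<union> middle_class ` F"

lemma column_class_mem:
  "(a,i) \<in> column_class X \<longleftrightarrow> ((a = 0 \<or> a = 1) \<and> (True,i) \<in> X) \<or> (a = 2 \<and> (False,i) \<in> X)"
  unfolding column_class_def Un_iff dn3_mem by auto

lemma top_class_mem: "(a,i) \<in> top_class E \<longleftrightarrow> a = 0 \<and> i \<in> E" unfolding top_class_def by auto
lemma middle_class_mem: "(a,i) \<in> middle_class E \<longleftrightarrow> a = 1 \<and> i \<in> E" unfolding middle_class_def by auto

lemma w_vertex_range: "X \<in> w \<Longrightarrow> (t,i) \<in> X \<Longrightarrow> i \<in> {1..k}"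
proof -
  assume "X \<in> w" "(t,i) \<in> X"
  then have "(t,i) \<in> verts k" using w_block by blast
  then show ?thesis by (simp add: verts_def)
qed

lemma w_top_vertex_left: "X \<in> w \<Longrightarrow> X \<notin> top_copy ` F \<Longrightarrow> (True,i) \<in> X \<Longrightarrow> i \<in> {1..r}"
proof -
  assume X: "X \<in> w" "X \<notin> top_copy ` F" "(True,i) \<in> X"
  have "i \<ge> 1" using w_vertex_range[OF X(1) X(3)] by simp
  moreover have "\<not> r < i" using w_block_right_top[OF X(1) X(3)] X(2) by auto
  ultimately show ?thesis by auto
qed

lemma F_member_range: "E \<in> F \<Longrightarrow> i \<in> E \<Longrightarrow> i \<in> {r+1..k}" using F_range by blast

lemma w_block_eq_top_copy: "E \<in> F \<Longrightarrow> i \<in> E \<Longrightarrow> X \<in> w \<Longrightarrow> (True,i) \<in> X \<Longrightarrow> X = top_copy E"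
  using w_disjoint[OF _ top_copy_F_in_w, of X E "(True,i)"] by auto

lemma not_top_copy_F: "(True,i) \<in> X \<Longrightarrow> i \<le> r \<Longrightarrow> X \<notin> top_copy ` F"
proof
  assume h: "(True,i) \<in> X" "i \<le> r" "X \<in> top_copy ` F"
  then obtain E where "E \<in> F" "X = top_copy E" by auto
  then have "i \<in> E" using h by auto
  then show False using F_member_range[OF \<open>E \<in> F\<close> \<open>i \<in> E\<close>] h by auto
qed

lemma stack_classes_cases:
  assumes "C \<in> stack_classes"
  obtains X where "X \<in> w" "X \<notin> top_copy ` F" "C = column_class X"
    | E where "E \<in> F" "C = top_class E"
    | E where "E \<in> F" "C = middle_class E"
  using assms unfolding stack_classes_def by blast

lemma stack_verts_D_w: "stack_verts D w = {(a, i). a \<le> (2::nat) \<and> i \<in> {1..k}}"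
  by (rule stack_verts_full[OF D_partition w_partition])

lemma stack_classes_sub: "\<forall>C\<in>stack_classes. C \<subseteq> stack_verts D w \<and> C \<noteq> {}"
proof
  fix C assume "C \<in> stack_classes"
  then consider X where "X \<in> w" "X \<notin> top_copy ` F" "C = column_class X"
      | E where "E \<in> F" "C = top_class E" | E where "E \<in> F" "C = middle_class E"
    by (rule stack_classes_cases)
  then show "C \<subseteq> stack_verts D w \<and> C \<noteq> {}"
  proof cases
    case 1
    have "C \<subseteq> stack_verts D w" unfolding stack_verts_D_w
    proof
      fix x assume "x \<in> C"
      moreover obtain a i where "x = (a,i)" by (cases x)
      ultimately show "x \<in> {(a,i). a \<le> (2::nat) \<and> i \<in> {1..k}}"
        using 1 column_class_mem w_vertex_range by auto
    qed
    moreover obtain v where "v \<in> X" using w_block 1 by blast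
    then have "dn3 v \<in> C" using 1 by (auto simp: column_class_def)
    ultimately show ?thesis by auto
  next
    case 2
    have "C \<subseteq> stack_verts D w" unfolding stack_verts_D_w
    proof
      fix x assume "x \<in> C"
      then obtain i where "x = (0,i)" "i \<in> E" using 2 by (auto simp: top_class_def)
      then show "x \<in> {(a,i). a \<le> (2::nat) \<and> i \<in> {1..k}}" using F_member_range[OF 2(1)] by force
    qed
    then show ?thesis using F_nonempty[OF 2(1)] 2 by (auto simp: top_class_def)
  next
    case 3
    have "C \<subseteq> stack_verts D w" unfolding stack_verts_D_w
    proof
      fix x assume "x \<in> C"
      then obtain i where "x = (1,i)" "i \<in> E" using 3 by (auto simp: middle_class_def)
      then show "x \<in> {(a,i). a \<le> (2::nat) \<and> i \<in> {1..k}}" using F_member_range[OF 3(1)] by force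
    qed
    then show ?thesis using F_nonempty[OF 3(1)] 3 by (auto simp: middle_class_def)
  qed
qed

lemma stack_classes_cover: "\<forall>x\<in>stack_verts D w. \<exists>C\<in>stack_classes. x \<in> C"
proof
  fix x assume "x \<in> stack_verts D w"
  then obtain a i where x: "x = (a,i)" "a \<le> 2" "i \<in> {1..k}" unfolding stack_verts_D_w by auto
  have vt: "(True,i) \<in> verts k" "(False,i) \<in> verts k" using x by (auto simp: verts_def)
  obtain XT where XT: "XT \<in> w" "(True,i) \<in> XT" using w_cover[OF vt(1)] by blast
  obtain XF where XF: "XF \<in> w" "(False,i) \<in> XF" using w_cover[OF vt(2)] by blast
  have XFn: "XF \<notin> top_copy ` F" using XF by auto
  consider "a = 0" | "a = 1" | "a = 2" using x by linarith
  then show "\<exists>C\<in>stack_classes. x \<in> C"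
  proof cases
    case 1
    show ?thesis
    proof (cases "r < i")
      case True
      then have "i \<in> {r+1..k}" using x by auto
      then obtain E where "E \<in> F" "i \<in> E" using F_cover by blast
      then show ?thesis
        using 1 x unfolding stack_classes_def
          by (intro bexI[of _ "top_class E"]) (auto simp: top_class_mem)
    next
      case False
      have "XT \<notin> top_copy ` F"
      proof
        assume "XT \<in> top_copy ` F"
        then obtain E where "E \<in> F" "XT = top_copy E" by auto
        then have "i \<in> E" using XT by auto
        then show False using F_member_range[OF \<open>E \<in> F\<close> \<open>i \<in> E\<close>] False by auto
      qed
      then show ?thesis
        using 1 x XT
          unfolding stack_classes_def
            by (intro bexI[of _ "column_class XT"]) (auto simp: column_class_mem)
    qed
  next
    case 2
    show ?thesis
    proof (cases "XT \<in> top_copy ` F")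
      case True
      then obtain E where "E \<in> F" "XT = top_copy E" by auto
      then show ?thesis
        using 2 x XT
          unfolding stack_classes_def
            by (intro bexI[of _ "middle_class E"]) (auto simp: middle_class_mem)
    next
      case False
      then show ?thesis
        using 2 x XT
          unfolding stack_classes_def
            by (intro bexI[of _ "column_class XT"]) (auto simp: column_class_mem)
    qed
  next
    case 3 then show ?thesis
      using x XF XFn
        unfolding stack_classes_def by (intro bexI[of _ "column_class XF"]) (auto simp: column_class_mem)
  qed
qed

lemma stack_classes_disjoint: "\<forall>C1\<in>stack_classes. \<forall>C2\<in>stack_classes. \<forall>x. x \<in> C1 \<longrightarrow> x \<in> C2 \<longrightarrow> C1 = C2"
proof (intro ballI allI impI)
  fix C1 C2 x assume C: "C1 \<in> stack_classes" "C2 \<in> stack_classes" "x \<in> C1" "x \<in> C2"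
  obtain a i where x: "x = (a,i)" by (cases x)
  have cc: "X1 \<in> w \<Longrightarrow> X2 \<in> w \<Longrightarrow> (a,i) \<in> column_class X1 \<Longrightarrow> (a,i) \<in> column_class X2 \<Longrightarrow> X1 = X2" for X1 X2
    using w_disjoint[of X1 X2 "(True,i)"] w_disjoint[of X1 X2 "(False,i)"]
      unfolding column_class_mem by auto
  have cu: "X \<in> w \<Longrightarrow> X \<notin> top_copy ` F \<Longrightarrow> E \<in> F \<Longrightarrow> (a,i) \<in> column_class X \<Longrightarrow> (a,i) \<in> top_class E
      \<Longrightarrow> False" for X E
    using w_block_eq_top_copy[of E i X] unfolding column_class_mem top_class_mem by auto
  have cd: "X \<in> w \<Longrightarrow> X \<notin> top_copy ` F \<Longrightarrow> E \<in> F \<Longrightarrow> (a,i) \<in> column_class X \<Longrightarrow> (a,i) \<in> middle_class E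
      \<Longrightarrow> False" for X E
    using w_block_eq_top_copy[of E i X] unfolding column_class_mem middle_class_mem by auto
  have uu: "E1 \<in> F \<Longrightarrow> E2 \<in> F \<Longrightarrow> (a,i) \<in> top_class E1 \<Longrightarrow> (a,i) \<in> top_class E2 \<Longrightarrow> E1 = E2" for E1 E2
    using F_disjoint[of E1 E2 i] unfolding top_class_mem by auto
  have dd: "E1 \<in> F \<Longrightarrow> E2 \<in> F \<Longrightarrow> (a,i) \<in> middle_class E1 \<Longrightarrow> (a,i) \<in> middle_class E2 \<Longrightarrow> E1 = E2" for E1 E2
    using F_disjoint[of E1 E2 i] unfolding middle_class_mem by auto
  have ud: "(a,i) \<in> top_class E1 \<Longrightarrow> (a,i) \<in> middle_class E2 \<Longrightarrow> False" for E1 E2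
    unfolding top_class_mem middle_class_mem by auto
  from C(1) consider X where "X \<in> w" "X \<notin> top_copy ` F" "C1 = column_class X"
      | E where "E \<in> F" "C1 = top_class E" | E where "E \<in> F" "C1 = middle_class E"
    by (rule stack_classes_cases)
  note c1 = this
  from C(2) consider X where "X \<in> w" "X \<notin> top_copy ` F" "C2 = column_class X"
      | E where "E \<in> F" "C2 = top_class E" | E where "E \<in> F" "C2 = middle_class E"
    by (rule stack_classes_cases)
  note c2 = this
  show "C1 = C2"
    apply (rule c1; rule c2)
    using C(3,4) x cc cu cd uu dd ud by metis+
qed

lemma stack_rel_within_stack_class: "\<forall>x y. (x,y) \<in> stack_rel D w \<longrightarrow> (\<exists>C\<in>stack_classes. x \<in> C \<and> y \<in> C)"
proof (intro allI impI)
  fix x y assume "(x,y) \<in> stack_rel D w"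
  then consider B where "B \<in> D" "x \<in> up3 ` B" "y \<in> up3 ` B" | B where "B \<in> w" "x \<in> dn3 ` B" "y \<in> dn3 ` B"
    unfolding stack_rel_def by blast
  then show "\<exists>C\<in>stack_classes. x \<in> C \<and> y \<in> C"
  proof cases
    case 1
    from D_block_cases[OF 1(1)] show ?thesis
    proof (elim disjE bexE)
      fix i assume i: "i \<in> {1..r}" "B = {(True,i),(False,i)}"
      have "(True,i) \<in> verts k" using i r_le_k by (auto simp: verts_def)
      then obtain X where X: "X \<in> w" "(True,i) \<in> X" using w_cover by blast
      have "X \<notin> top_copy ` F" using X i not_top_copy_F by auto
      moreover have "up3 ` B \<subseteq> column_class X" using i X by (auto simp: column_class_mem)
      moreover have "column_class X \<in> stack_classes"
        using X \<open>X \<notin> top_copy ` F\<close> unfolding stack_classes_def by blast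
      ultimately show ?thesis using 1 by blast
    next
      fix E assume E: "E \<in> F" "B = top_copy E"
      have "top_class E \<in> stack_classes" using E unfolding stack_classes_def by blast
      moreover have "x \<in> top_class E" "y \<in> top_class E"
        using 1 E unfolding top_class_def up3_top_copy by auto
      ultimately show ?thesis by blast
    next
      fix E assume E: "E \<in> F" "B = bot_copy E"
      have "middle_class E \<in> stack_classes" using E unfolding stack_classes_def by blast
      moreover have "x \<in> middle_class E" "y \<in> middle_class E"
        using 1 E unfolding middle_class_def up3_bot_copy by auto
      ultimately show ?thesis by blast
    qed
  next
    case 2
    show ?thesis
    proof (cases "B \<in> top_copy ` F")
      case True
      then obtain E where E: "E \<in> F" "B = top_copy E" by auto
      have "middle_class E \<in> stack_classes" using E unfolding stack_classes_def by blast
      moreover have "x \<in> middle_class E" "y \<in> middle_class E"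
        using 2 E unfolding middle_class_def dn3_top_copy by auto
      ultimately show ?thesis by blast
    next
      case False
      have "column_class B \<in> stack_classes" using False 2 unfolding stack_classes_def by blast
      moreover have "x \<in> column_class B" "y \<in> column_class B" using 2 unfolding column_class_def by auto
      ultimately show ?thesis by blast
    qed
  qed
qed

lemma stack_classes_connected: "\<forall>C\<in>stack_classes. \<forall>x\<in>C. \<forall>y\<in>C. (x,y) \<in> (stack_rel D w)\<^sup>*"
proof
  fix C assume "C \<in> stack_classes"
  then consider X where "X \<in> w" "X \<notin> top_copy ` F" "C = column_class X"
      | E where "E \<in> F" "C = top_class E" | E where "E \<in> F" "C = middle_class E"
    by (rule stack_classes_cases)
  then show "\<forall>x\<in>C. \<forall>y\<in>C. (x,y) \<in> (stack_rel D w)\<^sup>*"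
  proof cases
    case 1
    obtain v0 where v0: "v0 \<in> X" using w_block 1 by blast
    have hub: "z \<in> C \<Longrightarrow> (dn3 v0, z) \<in> (stack_rel D w)\<^sup>*" for z
    proof -
      assume "z \<in> C"
      then consider v where "v \<in> X" "z = dn3 v" | i where "(True,i) \<in> X" "z = (0,i)"
        using 1 unfolding column_class_def by blast
      then show ?thesis
      proof cases
        case 1
        then show ?thesis using stack_relI2[of X w "dn3 v0" z D] v0 \<open>X \<in> w\<close> by blast
      next
        case (2 i)
        have e1: "(dn3 v0, (1,i)) \<in> stack_rel D w"
          using stack_relI2[of X w "dn3 v0" "(1,i)" D] v0 \<open>X \<in> w\<close> 2 by (auto simp: dn3_mem)
        have "i \<in> {1..r}" using w_top_vertex_left 1 2 by blast
        then have e2: "((1,i), (0,i)) \<in> stack_rel D w"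
          using stack_relI1[OF D_vertical, of i "(1,i)" "(0,i)"] by (auto simp: up3_mem)
        show ?thesis using e1 e2 2 by (meson converse_rtrancl_into_rtrancl r_into_rtrancl)
      qed
    qed
    show ?thesis
    proof (intro ballI)
      fix x y assume "x \<in> C" "y \<in> C"
      then show "(x,y) \<in> (stack_rel D w)\<^sup>*" using hub rtrancl_stack_rel_sym by (meson rtrancl_trans)
    qed
  next
    case 2
    then show ?thesis
      using stack_relI1[OF D_top_copy[OF 2(1)], of _ _ w] unfolding up3_top_copy top_class_def by blast
  next
    case 3
    then show ?thesis
      using stack_relI2[OF top_copy_F_in_w[OF 3(1)], of _ _ D]
        unfolding dn3_top_copy middle_class_def by blast
  qed
qed

lemma components_D_w: "components D w = stack_classes"
  by (rule components_eqI) (fact stack_classes_sub stack_classes_cover stack_classes_disjoint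
      stack_rel_within_stack_class stack_classes_connected)+

lemma back3_column_class: "back3 ` (column_class X \<inter> {v. fst v \<noteq> 1}) = X"
proof (rule set_eqI, rule iffI)
  fix v assume "v \<in> back3 ` (column_class X \<inter> {v. fst v \<noteq> 1})"
  then obtain a i where "(a,i) \<in> column_class X" "a \<noteq> 1" "v = back3 (a,i)" by auto
  then show "v \<in> X" unfolding column_class_mem by auto
next
  fix v assume v: "v \<in> X"
  obtain t i where vt: "v = (t,i)" by (cases v)
  show "v \<in> back3 ` (column_class X \<inter> {v. fst v \<noteq> 1})"
  proof (cases t)
    case True
    then have "(0,i) \<in> column_class X \<inter> {v. fst v \<noteq> 1}" using v vt by (simp add: column_class_mem)
    then show ?thesis using vt True by (intro image_eqI[of _ _ "(0,i)"]) auto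
  next
    case False
    then have "(2,i) \<in> column_class X \<inter> {v. fst v \<noteq> 1}" using v vt by (simp add: column_class_mem)
    then show ?thesis using vt False by (intro image_eqI[of _ _ "(2,i)"]) auto
  qed
qed

lemma back3_top_class: "back3 ` (top_class E \<inter> {v. fst v \<noteq> 1}) = top_copy E"
proof (rule set_eqI, rule iffI)
  fix v assume "v \<in> back3 ` (top_class E \<inter> {v. fst v \<noteq> 1})"
  then show "v \<in> top_copy E" by (auto simp: top_class_def)
next
  fix v assume "v \<in> top_copy E"
  then obtain i where "i \<in> E" "v = (True,i)" by (auto simp: top_copy_def)
  then show "v \<in> back3 ` (top_class E \<inter> {v. fst v \<noteq> 1})"
    by (intro image_eqI[of _ _ "(0,i)"]) (auto simp: top_class_def)
qed

lemma middle_class_middle: "middle_class E \<inter> {v. fst v \<noteq> 1} = {}" by (auto simp: middle_class_def)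

lemma comp_diag_D_w: "comp_diag D w = w"
proof -
  have "comp_diag D w = {back3 ` (C \<inter> {v. fst v \<noteq> 1}) | C. C \<in> stack_classes \<and> C \<inter> {v. fst v \<noteq> 1} \<noteq> {}}"
    unfolding comp_diag_def components_D_w ..
  also have "\<dots> = w"
  proof (rule set_eqI, rule iffI)
    fix X assume "X \<in> {back3 ` (C \<inter> {v. fst v \<noteq> 1}) | C. C \<in> stack_classes \<and> C \<inter> {v. fst v \<noteq> 1} \<noteq> {}}"
    then obtain C where C: "C \<in> stack_classes" "C \<inter> {v. fst v \<noteq> 1} \<noteq> {}"
        "X = back3 ` (C \<inter> {v. fst v \<noteq> 1})" by blast
    from C(1) consider Y where "Y \<in> w" "Y \<notin> top_copy ` F" "C = column_class Y"
        | E where "E \<in> F" "C = top_class E" | E where "E \<in> F" "C = middle_class E"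
      unfolding stack_classes_def by blast
    then show "X \<in> w"
    proof cases
      case 1 then show ?thesis using C back3_column_class by simp
    next
      case 2 then show ?thesis using C back3_top_class top_copy_F_in_w by simp
    next
      case 3 then show ?thesis using C middle_class_middle by simp
    qed
  next
    fix X assume X: "X \<in> w"
    show "X \<in> {back3 ` (C \<inter> {v. fst v \<noteq> 1}) | C. C \<in> stack_classes \<and> C \<inter> {v. fst v \<noteq> 1} \<noteq> {}}"
    proof (cases "X \<in> top_copy ` F")
      case True
      then obtain E where E: "E \<in> F" "X = top_copy E" by auto
      have "top_class E \<in> stack_classes" using E unfolding stack_classes_def by blast
      moreover have "top_class E \<inter> {v. fst v \<noteq> 1} \<noteq> {}"
        using F_nonempty[OF E(1)] by (auto simp: top_class_def)
      ultimately show ?thesis using back3_top_class E by blast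
    next
      case False
      have "column_class X \<in> stack_classes" using X False unfolding stack_classes_def by blast
      moreover have "column_class X \<inter> {v. fst v \<noteq> 1} \<noteq> {}"
        using back3_column_class[of X] w_block[OF X] by auto
      ultimately show ?thesis using back3_column_class[of X] by blast
    qed
  qed
  finally show ?thesis .
qed

lemma ell_D_w: "ell D w = card F"
proof -
  have "{C \<in> components D w. C \<subseteq> {v. fst v = 1}} = middle_class ` F"
  proof (rule set_eqI, rule iffI)
    fix C assume "C \<in> {C \<in> components D w. C \<subseteq> {v. fst v = 1}}"
    then have C: "C \<in> stack_classes" "C \<subseteq> {v. fst v = 1}" using components_D_w by auto
    from C(1) consider Y where "Y \<in> w" "Y \<notin> top_copy ` F" "C = column_class Y"
        | E where "E \<in> F" "C = top_class E" | E where "E \<in> F" "C = middle_class E"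
      unfolding stack_classes_def by blast
    then show "C \<in> middle_class ` F"
    proof cases
      case 1
      have "column_class Y \<inter> {v. fst v \<noteq> 1} \<noteq> {}" using back3_column_class[of Y] w_block[OF 1(1)] by auto
      then show ?thesis using C 1 by auto
    next
      case 2
      then show ?thesis using C F_nonempty[OF 2(1)] by (auto simp: top_class_def)
    qed auto
  next
    fix C assume "C \<in> middle_class ` F"
    then show "C \<in> {C \<in> components D w. C \<subseteq> {v. fst v = 1}}"
      unfolding components_D_w stack_classes_def by (auto simp: middle_class_def)
  qed
  moreover have "inj_on middle_class F"
  proof (rule inj_onI)
    fix E1 E2 assume "E1 \<in> F" "E2 \<in> F" "middle_class E1 = middle_class E2"
    then show "E1 = E2" unfolding middle_class_def by (auto simp: set_eq_iff)
  qed
  ultimately show ?thesis unfolding ell_def by (simp add: card_image)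
qed

end
section \<open>The element \<open>1\<^sub>r \<otimes> e\<^sup>\<otimes>\<^sup>s\<close>\<close>

definition shift :: "nat \<Rightarrow> nat set \<Rightarrow> nat set" where "shift a E = (\<lambda>i. i + a) ` E"

definition e_blocks :: "alg \<Rightarrow> nat \<Rightarrow> nat \<Rightarrow> nat set set" where
  "e_blocks A r s = (\<lambda>i. {r + e_width A * i + 1 .. r + e_width A * i + e_width A}) ` {..<s}"

lemma e_width_pos: "e_width A \<ge> 1" by (cases A) (auto simp: e_width_def)

lemma shift_atLeastAtMost: "shift a {p..q} = {p+a..q+a}"
  unfolding shift_def by (auto simp: image_iff)

lemma e_blocks_shift: "e_blocks A r s = shift r ` e_blocks A 0 s"
  unfolding e_blocks_def image_image shift_atLeastAtMost by (simp add: algebra_simps)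

lemma e_blocks_0_Suc: "e_blocks A 0 (Suc s) = insert {1..e_width A} (shift (e_width A) ` e_blocks A 0 s)"
  unfolding e_blocks_def lessThan_Suc_eq_insert_0 image_insert image_image shift_atLeastAtMost
  by (simp add: algebra_simps image_image)

lemma juxt_top_copy: "(\<lambda>B. (\<lambda>(b,i). (b, i + a)) ` B) (top_copy E) = top_copy (shift a E)"
  by (auto simp: top_copy_def shift_def image_image)
lemma juxt_bot_copy: "(\<lambda>B. (\<lambda>(b,i). (b, i + a)) ` B) (bot_copy E) = bot_copy (shift a E)"
  by (auto simp: bot_copy_def shift_def image_image)

lemma e_diag_eq: "e_diag A = {top_copy {1..e_width A}, bot_copy {1..e_width A}}"
proof (cases A)
  case TL
  have "{1..2::nat} = {1,2}" by auto
  then show ?thesis using TL by (auto simp: e_diag_def e_width_def top_copy_def bot_copy_def)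
qed (auto simp: e_diag_def e_width_def top_copy_def bot_copy_def)

lemma e_pow_diag_eq: "e_pow_diag A s = top_copy ` e_blocks A 0 s \<union> bot_copy ` e_blocks A 0 s"
proof (induction s)
  case 0
  then show ?case by (simp add: e_blocks_def)
next
  case (Suc s)
  have "e_pow_diag A (Suc s) = e_diag A \<union> (\<lambda>B. (\<lambda>(b,i). (b, i + e_width A)) ` B) ` e_pow_diag A s"
    by (simp add: juxt_def)
  also have "\<dots>
      = {top_copy {1..e_width A}, bot_copy {1..e_width A}} \<union> (top_copy ` shift (e_width A) ` e_blocks A 0 s \<union> bot_copy ` shift (e_width A) ` e_blocks A 0 s)"
    unfolding Suc e_diag_eq image_Un image_image juxt_top_copy juxt_bot_copy ..
  also have "\<dots> = top_copy ` e_blocks A 0 (Suc s) \<union> bot_copy ` e_blocks A 0 (Suc s)"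
    unfolding e_blocks_0_Suc by auto
  finally show ?case .
qed

lemma full_copies_singletons: "(\<lambda>B. top_copy B \<union> bot_copy B) ` singletons r = id_diag r"
  unfolding singletons_def id_diag_def by (auto simp: top_copy_def bot_copy_def)


lemma e_blocks_props:
  assumes "E \<in> e_blocks A r s"
  shows "E \<subseteq> {r+1..r + e_width A * s}" "E \<noteq> {}" "card E = e_width A"
    "\<And>a b c. a \<in> E \<Longrightarrow> c \<in> E \<Longrightarrow> a \<le> b \<Longrightarrow> b \<le> c \<Longrightarrow> b \<in> E"
proof -
  obtain i where i: "i < s" "E = {r + e_width A * i + 1 .. r + e_width A * i + e_width A}"
    using assms unfolding e_blocks_def by auto
  have "e_width A * i + e_width A \<le> e_width A * s"
    using i(1) by (metis Suc_leI mult_Suc_right mult_le_mono2 add.commute)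
  then show "E \<subseteq> {r+1..r + e_width A * s}" using i by auto
  show "E \<noteq> {}" using i e_width_pos[of A] by auto
  show "card E = e_width A" using i by simp
  show "\<And>a b c. a \<in> E \<Longrightarrow> c \<in> E \<Longrightarrow> a \<le> b \<Longrightarrow> b \<le> c \<Longrightarrow> b \<in> E" using i by auto
qed

lemma e_blocks_disjoint:
  assumes "E1 \<in> e_blocks A r s" "E2 \<in> e_blocks A r s" "x \<in> E1" "x \<in> E2"
  shows "E1 = E2"
proof -
  let ?W = "e_width A"
  obtain i where i: "E1 = {r + ?W * i + 1 .. r + ?W * i + ?W}" using assms unfolding e_blocks_def by auto
  obtain j where j: "E2 = {r + ?W * j + 1 .. r + ?W * j + ?W}" using assms unfolding e_blocks_def by auto
  have "i = j"
  proof (rule ccontr)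
    assume "i \<noteq> j"
    then consider "i < j" | "j < i" by linarith
    then show False
    proof cases
      case 1 then have "?W * i + ?W \<le> ?W * j" by (metis Suc_leI mult_Suc_right mult_le_mono2 add.commute)
      then show False using assms(3,4) i j by auto
    next
      case 2 then have "?W * j + ?W \<le> ?W * i" by (metis Suc_leI mult_Suc_right mult_le_mono2 add.commute)
      then show False using assms(3,4) i j by auto
    qed
  qed
  then show ?thesis using i j by simp
qed

lemma e_blocks_cover:
  assumes "x \<in> {r+1..r + e_width A * s}"
  shows "\<exists>E\<in>e_blocks A r s. x \<in> E"
proof -
  let ?W = "e_width A"
  have W: "?W \<ge> 1" by (rule e_width_pos)
  define i where "i = (x - r - 1) div ?W"
  have e: "x - r - 1 = ?W * i + (x - r - 1) mod ?W" unfolding i_def by simp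
  have m: "(x - r - 1) mod ?W < ?W" using W by simp
  have d: "?W * i \<le> x - r - 1" "x - r - 1 < ?W * i + ?W" using e m by linarith+
  have "x - r - 1 < ?W * s" using assms W by auto
  then have "i < s" unfolding i_def using W by (simp add: div_less_iff_less_mult mult.commute)
  moreover have "x \<in> {r + ?W * i + 1 .. r + ?W * i + ?W}" using d assms by auto
  ultimately show ?thesis unfolding e_blocks_def by blast
qed



lemma e_blocks_range: "E \<in> e_blocks A r s \<Longrightarrow> i \<in> E \<Longrightarrow> r < i \<and> i \<le> r + e_width A * s"
  using e_blocks_props(1)[of E A r s] by auto


lemma partition_on_e_blocks: "partition_on {r + 1..r + e_width A * s} (e_blocks A r s)"
proof (rule partition_onI)
  show "\<Union>(e_blocks A r s) = {r + 1..r + e_width A * s}"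
    using e_blocks_props(1) e_blocks_cover by blast
  show "disjnt E1 E2" if "E1 \<in> e_blocks A r s" "E2 \<in> e_blocks A r s" "E1 \<noteq> E2" for E1 E2
    using e_blocks_disjoint[OF that(1,2)] that(3) unfolding disjnt_def by blast
  show "{} \<notin> e_blocks A r s" using e_blocks_props(2) by blast
qed

lemma admissible_size_e_width: "admissible_size A (e_width A)"
  by (cases A) (auto simp: admissible_size_def e_width_def)

lemma e_block_not_singleton: "E \<in> e_blocks A r s \<Longrightarrow> E \<notin> singletons r"
proof
  assume "E \<in> e_blocks A r s" "E \<in> singletons r"
  then obtain i where "E = {i}" "i \<le> r" by (auto simp: singletons_def)
  then show False using e_blocks_range[OF \<open>E \<in> e_blocks A r s\<close>, of i] by auto
qed

lemma one_tensor_e_diagram: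
  "juxt r (id_diag r) (e_pow_diag A s)
      = symmetric_diagram (singletons r \<union> e_blocks A r s) (singletons r)"
proof -
  have m: "(singletons r \<union> e_blocks A r s) - singletons r = e_blocks A r s"
    using e_block_not_singleton by blast
  have "juxt r (id_diag r) (e_pow_diag A s)
      = id_diag r \<union> (top_copy ` e_blocks A r s \<union> bot_copy ` e_blocks A r s)"
    unfolding juxt_def e_pow_diag_eq image_Un image_image juxt_top_copy juxt_bot_copy e_blocks_shift[of A r s] by simp
  also have "\<dots> = symmetric_diagram (singletons r \<union> e_blocks A r s) (singletons r)"
    unfolding symmetric_diagram_def m full_copies_singletons by blast
  finally show ?thesis .
qed

lemma card_e_blocks: "card (e_blocks A r s) = s"
proof -
  let ?W = "e_width A"
  have W: "?W \<ge> 1" by (rule e_width_pos)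
  have "inj_on (\<lambda>i. {r + ?W * i + 1 .. r + ?W * i + ?W}) {..<s}"
  proof (rule inj_onI)
    fix i j assume "{r + ?W * i + 1 .. r + ?W * i + ?W} = {r + ?W * j + 1 .. r + ?W * j + ?W}"
    moreover have "r + ?W * i + 1 \<in> {r + ?W * i + 1 .. r + ?W * i + ?W}"
        "r + ?W * j + 1 \<in> {r + ?W * j + 1 .. r + ?W * j + ?W}"
      using W by auto
    ultimately have "r + ?W * i + 1 \<in> {r + ?W * j + 1 .. r + ?W * j + ?W}"
        "r + ?W * j + 1 \<in> {r + ?W * i + 1 .. r + ?W * i + ?W}"
      by simp_all
    then have "?W * i = ?W * j" by auto
    then show "i = j" using W by simp
  qed
  then show ?thesis unfolding e_blocks_def by (simp add: card_image)
qed


lemma half_diagram_singletons: "half_diagram A r (singletons r) (singletons r)"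
proof (rule half_diagramI)
  show "partition_on {1..r} (singletons r)"
    unfolding singletons_def by (rule partition_on_singletons)
  show "noncrossing (singletons r)"
    by (rule noncrossingI) (auto simp: singletons_def)
  show "marks_exposed (singletons r) (singletons r)"
    by (rule marks_exposedI) auto
qed (auto simp: singletons_def)

lemma half_diagram_extend:
  assumes hd: "half_diagram A r Q S"
  shows "half_diagram A (r + e_width A * s) (Q \<union> e_blocks A r s) S"
proof (rule half_diagramI)
  let ?F = "e_blocks A r s"
  have left: "B \<subseteq> {1..r}" if "B \<in> Q" for B using half_diagram_block[OF hd that] by blast
  show "partition_on {1..r + e_width A * s} (Q \<union> ?F)"
  proof -
    have "partition_on ({1..r} \<union> {r + 1..r + e_width A * s}) (Q \<union> ?F)"
      by (rule partition_on_Un[OF half_diagram_partition[OF hd] partition_on_e_blocks]) auto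
    moreover have "{1..r} \<union> {r + 1..r + e_width A * s} = {1..r + e_width A * s}" by auto
    ultimately show ?thesis by (simp only:)
  qed
  show "S \<subseteq> Q \<union> ?F" using half_diagram_marks_subset[OF hd] by blast
  show "card B = 1" if "B \<in> S" for B using half_diagram_mark_singleton[OF hd that] by force
  show "admissible_size A (card B)" if "B \<in> Q \<union> ?F" "B \<notin> S" for B
  proof (cases "B \<in> Q")
    case True
    then show ?thesis using half_diagram_size[OF hd _ that(2)] by blast
  next
    case False
    then show ?thesis using that(1) e_blocks_props(3)[of B A r s] admissible_size_e_width by simp
  qed
  show "noncrossing (Q \<union> ?F)"
  proof (rule noncrossingI)
    fix B1 B2 a b c e assume h: "B1 \<in> Q \<union> ?F" "B2 \<in> Q \<union> ?F" "B1 \<noteq> B2" "a \<in> B1" "c \<in> B1"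
      "b \<in> B2" "e \<in> B2" "a < b" "b < c" "c < e"
    consider "B1 \<in> Q" "B2 \<in> Q" | "B1 \<in> Q" "B2 \<in> ?F" | "B1 \<in> ?F" "B2 \<in> Q" | "B1 \<in> ?F" "B2 \<in> ?F"
      using h(1,2) by blast
    then show False
    proof cases
      case 1
      then show ?thesis using noncrossingD[OF half_diagram_noncrossing[OF hd] _ _ h(3-10)] by blast
    next
      case 2
      then show ?thesis using left[OF 2(1)] e_blocks_range[OF 2(2) h(6)] h(5,9) by auto
    next
      case 3
      then show ?thesis using left[OF 3(2)] e_blocks_range[OF 3(1) h(4)] h(6,8) by auto
    next
      case 4
      then have "b \<in> B1" using e_blocks_props(4)[OF 4(1) h(4,5)] h(8,9) by simp
      then show ?thesis using e_blocks_disjoint[of B1 A r s B2 b] 4 h(3,6) by blast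
    qed
  qed
  show "marks_exposed (Q \<union> ?F) S"
  proof (rule marks_exposedI)
    fix B j a c assume h: "B \<in> Q \<union> ?F" "B \<notin> S" "{j} \<in> S" "a \<in> B" "c \<in> B" "a < j" "j < c"
    have "j \<le> r" using left[of "{j}"] h(3) half_diagram_marks_subset[OF hd] by auto
    show False
    proof (cases "B \<in> Q")
      case True
      then show ?thesis using marks_exposedD[OF half_diagram_marks_exposed[OF hd] True h(2-7)] by simp
    next
      case False
      then have "B \<in> ?F" using h(1) by blast
      then show ?thesis using e_blocks_range[OF _ h(4)] h(6) \<open>j \<le> r\<close> by fastforce
    qed
  qed
qed

lemma half_diagram_restrict:
  assumes hd: "half_diagram A (r + e_width A * s) P S" and F: "e_blocks A r s \<subseteq> P - S"
  shows "half_diagram A r (P - e_blocks A r s) S"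
proof (rule half_diagramI)
  let ?F = "e_blocks A r s"
  have "\<Union>?F = {r + 1..r + e_width A * s}"
    using partition_onD1[OF partition_on_e_blocks, of r A s] by simp
  then have "{1..r + e_width A * s} - \<Union>?F = {1..r}" by auto
  moreover have "partition_on ({1..r + e_width A * s} - \<Union>?F) (P - ?F)"
    using partition_on_Diff[OF half_diagram_partition[OF hd]] F by blast
  ultimately show "partition_on {1..r} (P - ?F)" by (simp only:)
  show "S \<subseteq> P - ?F" using half_diagram_marks_subset[OF hd] F by blast
  show "card B = 1" if "B \<in> S" for B using half_diagram_mark_singleton[OF hd that] by force
  show "admissible_size A (card B)" if "B \<in> P - ?F" "B \<notin> S" for B
    using that half_diagram_size[OF hd] by blast
  show "noncrossing (P - ?F)"
    by (rule noncrossing_subset[OF half_diagram_noncrossing[OF hd]]) auto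
  show "marks_exposed (P - ?F) S"
    by (rule marks_exposed_mono[OF half_diagram_marks_exposed[OF hd]]) auto
qed

section \<open>The character\<close>

lemma finite_Pk: "finite (Pk k)"
proof -
  have "Pk k \<subseteq> Pow (Pow (verts k))" unfolding Pk_def partition_on_def by auto
  moreover have "finite (verts k)" unfolding verts_def by simp
  ultimately show ?thesis by (meson finite_Pow_iff finite_subset)
qed

lemma finite_alg_diagrams: "finite {d. in_alg A k d}"
  by (rule finite_subset[OF _ finite_Pk]) (auto simp: in_alg_def)

lemma finite_module_basis: "finite (module_basis A k m)"
  by (rule finite_subset[OF _ finite_alg_diagrams]) (auto simp: module_basis_def)
text \<open>If some \<open>top_copy E\<close>, \<open>E\<close> a block of \<open>e\<^sup>\<otimes>\<^sup>s\<close>, is not a block of \<open>w\<close>, it survives both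
  compositions and so \<open>D \<circ> w \<circ> D\<^sup>T \<noteq> w\<close>.\<close>

lemma act_coeff_one_tensor_e:
  assumes k: "k = r + e_width A * s" and w: "w \<in> module_basis A k m"
  shows "act_coeff n m (symmetric_diagram (singletons r \<union> e_blocks A r s) (singletons r)) w w
    = (if \<forall>E\<in>e_blocks A r s. top_copy E \<in> w then n ^ s else 0)"
proof -
  let ?F = "e_blocks A r s"
  let ?D = "symmetric_diagram (singletons r \<union> ?F) (singletons r)"
  have p0: "partition_on {1..k} (singletons r \<union> ?F)"
    using half_diagram_partition[OF half_diagram_extend[OF half_diagram_singletons]] k by simp
  have Dp: "partition_on (verts k) ?D" using partition_on_symmetric_diagram[OF p0] by auto
  obtain P S where hd: "half_diagram A k P S" and PS: "card S = m" "w = symmetric_diagram P S"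
    using w unfolding module_basis_eq by blast
  note p = half_diagram_partition[OF hd] and SP = half_diagram_marks_subset[OF hd]
  show ?thesis
  proof (cases "\<forall>E\<in>?F. top_copy E \<in> w")
    case True
    have FP: "?F \<subseteq> P - S"
      using True PS(2) e_blocks_props(2) top_copy_in_symmetric_diagram[OF p SP] by blast
    interpret absorption k r P S ?F
    proof
      show "\<forall>E\<in>?F. E \<subseteq> {r + 1..k}" using e_blocks_props(1) k by blast
    qed (use p SP FP p0 k in auto)
    have trD: "transp_diag ?D = ?D" and trw: "transp_diag w = w"
      using PS(2) transp_symmetric_diagram by blast+
    have left: "comp_diag ?D w = w" using comp_diag_D_w unfolding w_def D_def PS(2) .
    have "comp_diag w ?D = comp_diag (transp_diag w) (transp_diag ?D)" using trD trw by simp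
    also have "\<dots> = w" using comp_diag_transp[of w ?D] left trw by simp
    finally have right: "comp_diag w ?D = w" .
    have "ell ?D w = s" using ell_D_w card_e_blocks unfolding w_def D_def PS(2) by simp
    moreover have "nprop w = m" using nprop_symmetric_diagram[OF p SP] PS by simp
    ultimately show ?thesis using True trD left right unfolding act_coeff_def by (simp add: Let_def)
  next
    case False
    then obtain E where E: "E \<in> ?F" "top_copy E \<notin> w" by blast
    have ED: "top_copy E \<in> ?D"
      using E(1) e_block_not_singleton[OF E(1)] unfolding symmetric_diagram_mem by blast
    have top: "\<forall>v\<in>top_copy E. fst v" by (auto simp: top_copy_def)
    have ne: "top_copy E \<noteq> {}" using e_blocks_props(2)[OF E(1)] by (auto simp: top_copy_def)
    have uq: "\<forall>B'\<in>?D. B' \<inter> top_copy E \<noteq> {} \<longrightarrow> B' = top_copy E"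
      using partition_on_disjoint[OF Dp _ ED] by blast
    note once = top_row_block_comp_diag[OF ED ne top uq, of w]
    note twice = top_row_block_comp_diag[OF conjunct1[OF once] ne top conjunct2[OF once], of "transp_diag ?D"]
    then have "comp_diag (comp_diag ?D w) (transp_diag ?D) \<noteq> w" using E(2) by auto
    then have "act_coeff n m ?D w w = 0" unfolding act_coeff_def Let_def by simp
    then show ?thesis using False by (simp only: if_False)
  qed
qed

lemma card_fixed_basis:
  assumes k: "k = r + e_width A * s"
  shows "card {w \<in> module_basis A k m. \<forall>E\<in>e_blocks A r s. top_copy E \<in> w} = card (half_diagrams A r m)"
proof -
  let ?F = "e_blocks A r s"
  define glue where "glue = (\<lambda>(Q, S). symmetric_diagram (Q \<union> ?F) S)"
  have QF: "E \<notin> Q" if hd: "half_diagram A r Q S" and E: "E \<in> ?F" for Q S E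
  proof
    assume "E \<in> Q"
    obtain i where "i \<in> E" using e_blocks_props(2)[OF E] by blast
    then show False using half_diagram_block[OF hd \<open>E \<in> Q\<close>] e_blocks_range[OF E] by fastforce
  qed
  have extend: "half_diagram A k (Q \<union> ?F) S" if "half_diagram A r Q S" for Q S
    using half_diagram_extend[OF that] k by simp
  have "{w \<in> module_basis A k m. \<forall>E\<in>?F. top_copy E \<in> w} = glue ` half_diagrams A r m"
  proof (rule set_eqI, rule iffI)
    fix w assume w: "w \<in> {w \<in> module_basis A k m. \<forall>E\<in>?F. top_copy E \<in> w}"
    then obtain P S where hd: "half_diagram A k P S" and PS: "card S = m" "w = symmetric_diagram P S"
      unfolding module_basis_eq by blast
    have FP: "?F \<subseteq> P - S"
      using w PS(2) e_blocks_props(2) half_diagram_marks_subset[OF hd]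
        top_copy_in_symmetric_diagram[OF half_diagram_partition[OF hd]] by blast
    have "(P - ?F, S) \<in> half_diagrams A r m"
      using half_diagram_restrict[of A r s P S] hd FP k PS(1) by (simp add: half_diagrams_def)
    moreover have "P - ?F \<union> ?F = P" using FP by blast
    then have "glue (P - ?F, S) = w" unfolding glue_def using PS(2) by simp
    ultimately show "w \<in> glue ` half_diagrams A r m" by (metis image_eqI)
  next
    fix w assume "w \<in> glue ` half_diagrams A r m"
    then obtain Q S where hd: "half_diagram A r Q S" and QS: "card S = m"
        "w = symmetric_diagram (Q \<union> ?F) S"
      unfolding glue_def half_diagrams_def by auto
    have "w \<in> module_basis A k m" unfolding module_basis_eq using extend[OF hd] QS by blast
    moreover have "top_copy E \<in> w" if E: "E \<in> ?F" for E
      using QF[OF hd E] half_diagram_marks_subset[OF hd] QS(2) E by (auto simp: symmetric_diagram_mem)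
    ultimately show "w \<in> {w \<in> module_basis A k m. \<forall>E\<in>?F. top_copy E \<in> w}" by blast
  qed
  moreover have "inj_on glue (half_diagrams A r m)"
  proof (rule inj_onI, clarify)
    fix Q1 S1 Q2 S2 assume "(Q1, S1) \<in> half_diagrams A r m" "(Q2, S2) \<in> half_diagrams A r m"
      and eq: "glue (Q1, S1) = glue (Q2, S2)"
    then have hd: "half_diagram A r Q1 S1" "half_diagram A r Q2 S2" by (auto simp: half_diagrams_def)
    have "Q1 \<union> ?F = Q2 \<union> ?F \<and> S1 = S2"
      using symmetric_diagram_inj[OF half_diagram_partition[OF extend[OF hd(1)]] _
          half_diagram_partition[OF extend[OF hd(2)]]] eq
        half_diagram_marks_subset[OF hd(1)] half_diagram_marks_subset[OF hd(2)]
      unfolding glue_def by blast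
    moreover have "Q1 \<inter> ?F = {}" "Q2 \<inter> ?F = {}" using QF hd by blast+
    ultimately show "Q1 = Q2 \<and> S1 = S2" by blast
  qed
  ultimately show ?thesis by (simp add: card_image)
qed

lemma diag_trace_one_tensor_e:
  assumes "k = r + e_width A * s"
  shows "diag_trace A k n m (symmetric_diagram (singletons r \<union> e_blocks A r s) (singletons r))
    = n ^ s * card (half_diagrams A r m)"
proof -
  let ?W = "{w \<in> module_basis A k m. \<forall>E\<in>e_blocks A r s. top_copy E \<in> w}"
  have "diag_trace A k n m (symmetric_diagram (singletons r \<union> e_blocks A r s) (singletons r))
      = (\<Sum>w\<in>module_basis A k m. if \<forall>E\<in>e_blocks A r s. top_copy E \<in> w then n ^ s else 0)"
    unfolding diag_trace_def using act_coeff_one_tensor_e[OF assms] by (intro sum.cong) auto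
  also have "\<dots> = (\<Sum>w\<in>?W. n ^ s)"
    by (rule sum.inter_filter[symmetric, OF finite_module_basis])
  also have "\<dots> = n ^ s * card ?W" by simp
  finally show ?thesis using card_fixed_basis[OF assms] by simp
qed

lemma character_one_tensor_e:
  assumes "k = r + e_width A * s"
  shows "character A k n m (one_tensor_e A n r s)
    = (1 / n) ^ s * diag_trace A k n m (symmetric_diagram (singletons r \<union> e_blocks A r s) (singletons r))"
proof -
  let ?D = "symmetric_diagram (singletons r \<union> e_blocks A r s) (singletons r)"
  have "half_diagram A k (singletons r \<union> e_blocks A r s) (singletons r)"
    using half_diagram_extend[OF half_diagram_singletons] assms by simp
  then have D: "in_alg A k ?D"
    using in_alg_symmetric_diagram half_diagram_partition half_diagram_marks_subset by blast
  have "character A k n m (one_tensor_e A n r s)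
      = (\<Sum>d\<in>{d. in_alg A k d}. if d = ?D then (1 / n) ^ s * diag_trace A k n m d else 0)"
    unfolding character_def one_tensor_e_def one_tensor_e_diagram by (intro sum.cong) auto
  also have "\<dots> = (1 / n) ^ s * diag_trace A k n m ?D"
    using D finite_alg_diagrams by (simp add: sum.delta')
  finally show ?thesis .
qed

theorem mainTheorem15:
  fixes A :: alg and n k m r s :: nat
  assumes "n \<ge> 2 * k"
    and "admissible_m A k m"
    and "if A = TL then r + 2 * s = k else r + s = k"
  shows "character A k (real n) m (one_tensor_e A (real n) r s) = real_of_int (F_val A m r)"
proof -
  have k: "k = r + e_width A * s" using assms(3) by (cases A) (auto simp: e_width_def)
  have "s = 0 \<or> k \<ge> 1" using k e_width_pos[of A] by (cases s) auto
  then have "real n \<noteq> 0 \<or> s = 0" using assms(1) by auto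
  then have "(1 / real n) ^ s * real n ^ s = 1" by (auto simp: power_one_over)
  then have "character A k (real n) m (one_tensor_e A (real n) r s) = card (half_diagrams A r m)"
    by (simp add: character_one_tensor_e[OF k] diag_trace_one_tensor_e[OF k])
  also have "\<dots> = F_val A m r"
  proof -
    have "even (r + m)" if "A = TL"
    proof -
      have "m mod 2 = k mod 2" "k = r + 2 * s" using assms(2,3) that unfolding admissible_m_def by auto
      then show ?thesis by presburger
    qed
    then show ?thesis by (simp add: card_half_diagrams F_val_eq_path_count)
  qed
  finally show ?thesis .
qed

end
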